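(* For the base family under the $\mathbf{c}$-weighted MaxWeight algorithm with $\|\boldsymbol\sigma^{(\epsilon)}\|^2\le\widetilde\sigma^2$ for all $\epsilon$ (with $\widetilde\sigma$ independent of $\epsilon$), there exist $\nu'_{\min}>0$ and, for each $r\in\{1,2,\dots\}$, a constant $M_r$, depending only on $r,\widetilde\sigma,\boldsymbol\nu,A_{\max},\nu_{\min},\mathbf{c},n$ and not on $\epsilon$, such that for all $0<\epsilon\le\nu'_{\min}$, $$\mathbb{E}\big[\|\overline{Q}^{(\epsilon)}_{\perp\mathcal{K}_{\mathbf{c}}}\|_{\mathbf{c}}^r\big]\le (M_r)^r .$$
   Context: Fix $n\ge2$ and $\mathbf{c}=(c_{ij})$ with all $c_{ij}>0$. $\langle x,y\rangle_{\mathbf{c}}=\sum_{ij}c_{ij}x_{ij}y_{ij}$, $\|x\|_{\mathbf{c}}^2=\langle x,x\rangle_{\mathbf{c}}$. $\mathcal{P}$: $n\times n$ permutation matrices. $\mathcal{F}$: nonnegative $n\times n$ matrices with all row and column sums $1$. $\mathcal{K}_{\mathbf{c}}=\{x: x_{ij}=(w_i+\tilde w_j)/c_{ij},\ w,\tilde w\in\mathbb{R}_+^n\}$ (a closed convex cone); $x_{\parallel\mathcal{K}_{\mathbf{c}}}=\arg\min_{y\in\mathcal{K}_{\mathbf{c}}}\|x-y\|_{\mathbf{c}}$ and $x_{\perp\mathcal{K}_{\mathbf{c}}}=x-x_{\parallel\mathcal{K}_{\mathbf{c}}}$. Dynamics: $Q(t+1)=Q(t)+A(t)-S(t)+U(t)$,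 $U_{ij}(t)=\max(0,S_{ij}(t)-Q_{ij}(t)-A_{ij}(t))$; $\mathbf{c}$-weighted MaxWeight picks $S(t)\in\arg\max_{s\in\mathcal{P}}\langle Q(t),s\rangle_{\mathbf{c}}$, ties uniformly at random. Base family: for $0<\epsilon<1$, arrivals $A^{(\epsilon)}_{ij}(t)\in\{0,\dots,A_{\max}\}$ independent over $(i,j),t$, identically distributed in $t$, mean $(1-\epsilon)\boldsymbol\nu$ with $\boldsymbol\nu$ in the relative interior of $\mathcal{F}$, $\nu_{\min}=\min\nu_{ij}>0$, variance vector $(\boldsymbol\sigma^{(\epsilon)})^2$; the queue-length process converges in distribution to a steady-state vector $\overline{Q}^{(\epsilon)}$. *)

theory Defs
  imports "HOL-Analysis.Analysis" "HOL-Probability.Probability"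
begin

text \<open>n x n matrices are indexed by a finite type 'n (n = CARD('n)).
  Real matrices: real^'n^'n; queue-length / arrival matrices: nat^'n^'n.\<close>

definition cinner :: "real^'n^'n \<Rightarrow> real^'n^'n \<Rightarrow> real^'n^'n \<Rightarrow> real" where
  "cinner c x y = (\<Sum>i\<in>UNIV. \<Sum>j\<in>UNIV. c$i$j * x$i$j * y$i$j)"

definition cnorm :: "real^'n^'n \<Rightarrow> real^'n^'n \<Rightarrow> real" where
  "cnorm c x = sqrt (cinner c x x)"

definition perm_matrices :: "(real^'n^'n) set" where
  "perm_matrices = {(\<chi> i j. if p i = j then 1 else 0) | p. p permutes (UNIV :: 'n set)}"

definition doubly_stochastic :: "(real^'n^'n) set" where
  "doubly_stochastic = {x. (\<forall>i j. 0 \<le> x$i$j) \<and> (\<forall>i. (\<Sum>j\<in>UNIV. x$i$j) = 1)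
                                \<and> (\<forall>j. (\<Sum>i\<in>UNIV. x$i$j) = 1)}"

definition cone_K :: "real^'n^'n \<Rightarrow> (real^'n^'n) set" where
  "cone_K c = {x. \<exists>w w' :: real^'n. (\<forall>i. 0 \<le> w$i) \<and> (\<forall>j. 0 \<le> w'$j) \<and>
                   x = (\<chi> i j. (w$i + w'$j) / c$i$j)}"

definition proj_K :: "real^'n^'n \<Rightarrow> real^'n^'n \<Rightarrow> real^'n^'n" where
  "proj_K c x = (SOME y. y \<in> cone_K c \<and> (\<forall>z\<in>cone_K c. cnorm c (x - y) \<le> cnorm c (x - z)))"

definition perp_K :: "real^'n^'n \<Rightarrow> real^'n^'n \<Rightarrow> real^'n^'n" where
  "perp_K c x = x - proj_K c x"

definition realmat :: "nat^'n^'n \<Rightarrow> real^'n^'n" where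
  "realmat Q = (\<chi> i j. real (Q$i$j))"

definition maxweight :: "real^'n^'n \<Rightarrow> nat^'n^'n \<Rightarrow> (real^'n^'n) pmf" where
  "maxweight c Q = pmf_of_set {s \<in> perm_matrices.
       \<forall>s'\<in>perm_matrices. cinner c (realmat Q) s' \<le> cinner c (realmat Q) s}"

definition arrivals :: "('n \<Rightarrow> 'n \<Rightarrow> nat pmf) \<Rightarrow> (nat^'n^'n) pmf" where
  "arrivals a = map_pmf (\<lambda>f. \<chi> i j. f (i, j)) (Pi_pmf UNIV 0 (\<lambda>(i, j). a i j))"

definition qstep :: "real^'n^'n \<Rightarrow> ('n \<Rightarrow> 'n \<Rightarrow> nat pmf) \<Rightarrow> nat^'n^'n \<Rightarrow> (nat^'n^'n) pmf" where
  "qstep c a Q = bind_pmf (arrivals a) (\<lambda>A. bind_pmf (maxweight c Q) (\<lambda>S.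
      return_pmf (\<chi> i j. let q = real (Q$i$j); aa = real (A$i$j); s = S$i$j;
                             u = max 0 (s - q - aa)
                         in nat \<lfloor>q + aa - s + u\<rfloor>)))"

primrec qdist :: "real^'n^'n \<Rightarrow> ('n \<Rightarrow> 'n \<Rightarrow> nat pmf) \<Rightarrow> (nat^'n^'n) pmf \<Rightarrow> nat \<Rightarrow> (nat^'n^'n) pmf" where
  "qdist c a q0 0 = q0"
| "qdist c a q0 (Suc t) = bind_pmf (qdist c a q0 t) (qstep c a)"

end

theory Submission
  imports Defs
begin

text \<open>Write \<open>V(Q) = \<parallel>Q\<^sub>\<perp>\<parallel>\<^sub>c\<close>. Birkhoff's theorem shows that \<open>\<nu>\<close>, lying in the relative
  interior of the Birkhoff polytope, sees every permutation with weight at least \<open>\<eta>/n!\<close>; hence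
  a small MaxWeight gap \<open>max\<^sub>s \<langle>Q, s\<rangle>\<^sub>c - \<langle>Q, \<nu>\<rangle>\<^sub>c\<close> forces every rectangle
  \<open>c\<^sub>i\<^sub>j Q\<^sub>i\<^sub>j + c\<^sub>k\<^sub>l Q\<^sub>k\<^sub>l - c\<^sub>i\<^sub>l Q\<^sub>i\<^sub>l - c\<^sub>k\<^sub>j Q\<^sub>k\<^sub>j\<close> to be small, so that
  \<open>c\<^sub>i\<^sub>j Q\<^sub>i\<^sub>j\<close> is close to a sum \<open>w\<^sub>i + w'\<^sub>j\<close>, i.e. Q is close to the cone:
  \<open>V(Q) \<le> K (gap)\<close>. Under MaxWeight the expected change of \<open>V\<^sup>2\<close> is at most twice the
  negative gap plus a constant, so V drifts down by a fixed amount once it is large, while its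
  increments are bounded. Thus \<open>exp (\<theta> V)\<close> is a Lyapunov function with constants independent of
  \<open>\<epsilon>\<close> for small \<open>\<epsilon>\<close>, the limit law is stationary, and the resulting bound on
  \<open>E exp (\<theta> V)\<close> gives all moments through \<open>x\<^sup>r \<le> r! \<theta>\<^sup>-\<^sup>r e\<^sup>\<theta>\<^sup>x\<close>.\<close>

section \<open>The weighted inner product\<close>

definition cscale :: "real^'n^'n \<Rightarrow> real^'n^'n \<Rightarrow> real^'n^'n" where
  "cscale c x = (\<chi> i j. sqrt (c$i$j) * x$i$j)"

lemma cscale_diff: "cscale c (x - y) = cscale c x - cscale c y"
  by (simp add: cscale_def vec_eq_iff algebra_simps)

lemma cscale_add: "cscale c (x + y) = cscale c x + cscale c y"
  by (simp add: cscale_def vec_eq_iff algebra_simps)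

lemma entry_le_double_sum:
  fixes f :: "'a::finite \<Rightarrow> 'b::finite \<Rightarrow> real"
  assumes "\<And>i j. 0 \<le> f i j"
  shows "f i j \<le> (\<Sum>i\<in>UNIV. \<Sum>j\<in>UNIV. f i j)"
proof -
  have "f i j \<le> (\<Sum>j\<in>UNIV. f i j)" by (rule member_le_sum) (auto intro: assms)
  also have "\<dots> \<le> (\<Sum>i\<in>UNIV. \<Sum>j\<in>UNIV. f i j)"
    by (rule member_le_sum[where f = "\<lambda>i. \<Sum>j\<in>UNIV. f i j"]) (auto intro!: sum_nonneg assms)
  finally show ?thesis .
qed

context
  fixes c :: "real^'n::finite^'n"
  assumes cpos: "\<forall>i j. 0 < c$i$j"
begin

lemma cinner_eq_inner_cscale: "cinner c x y = inner (cscale c x) (cscale c y)"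
proof -
  have entry: "sqrt (c$i$j) * x$i$j * (sqrt (c$i$j) * y$i$j) = c$i$j * x$i$j * y$i$j" for i j
  proof -
    have "sqrt (c$i$j) * sqrt (c$i$j) = c$i$j" using cpos by (simp add: less_imp_le)
    then show ?thesis by (metis mult.assoc mult.commute)
  qed
  show ?thesis
    unfolding cinner_def cscale_def inner_vec_def by (simp add: entry)
qed

lemma cnorm_eq_norm_cscale: "cnorm c x = norm (cscale c x)"
  by (simp add: cnorm_def cinner_eq_inner_cscale norm_eq_sqrt_inner)

lemma cnorm_nonneg: "0 \<le> cnorm c x"
  by (simp add: cnorm_eq_norm_cscale)

lemma cnorm_triangle: "cnorm c (x + y) \<le> cnorm c x + cnorm c y"
  using norm_triangle_ineq by (simp add: cnorm_eq_norm_cscale cscale_add)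

lemma cnorm_minus_commute: "cnorm c (x - y) = cnorm c (y - x)"
  using norm_minus_commute by (simp add: cnorm_eq_norm_cscale cscale_diff)

lemma cnorm_power2: "(cnorm c x)^2 = cinner c x x"
  by (simp add: cnorm_eq_norm_cscale cinner_eq_inner_cscale power2_norm_eq_inner)

lemma cinner_Cauchy_Schwarz: "\<bar>cinner c x y\<bar> \<le> cnorm c x * cnorm c y"
  using Cauchy_Schwarz_ineq2 by (simp add: cinner_eq_inner_cscale cnorm_eq_norm_cscale)

lemma cnorm_entry_le: "c$i$j * (x$i$j)^2 \<le> (cnorm c x)^2"
proof -
  have "c$i$j * (x$i$j)^2 \<le> (\<Sum>i\<in>UNIV. \<Sum>j\<in>UNIV. c$i$j * (x$i$j)^2)"
    using cpos by (intro entry_le_double_sum[where f = "\<lambda>i j. c$i$j * (x$i$j)^2"]) (simp add: less_imp_le)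
  also have "\<dots> = cinner c x x"
    by (simp add: cinner_def power2_eq_square mult.assoc)
  finally show ?thesis by (simp add: cnorm_power2)
qed

end

lemma cinner_add_left: "cinner c (x + y) z = cinner c x z + cinner c y z"
  by (simp add: cinner_def algebra_simps sum.distrib)

lemma cinner_add_right: "cinner c x (y + z) = cinner c x y + cinner c x z"
  by (simp add: cinner_def algebra_simps sum.distrib)

lemma cinner_diff_left: "cinner c (x - y) z = cinner c x z - cinner c y z"
  by (simp add: cinner_def algebra_simps sum_subtractf)

lemma cinner_diff_right: "cinner c x (y - z) = cinner c x y - cinner c x z"
  by (simp add: cinner_def algebra_simps sum_subtractf)

lemma cinner_commute: "cinner c x y = cinner c y x"
  by (simp add: cinner_def algebra_simps)

section \<open>Birkhoff's theorem in linear-functional form\<close>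

definition pmat :: "('n \<Rightarrow> 'n) \<Rightarrow> real^'n^'n" where
  "pmat p = (\<chi> i j. if p i = j then 1 else 0)"

definition frob :: "real^'n^'n \<Rightarrow> real^'n^'n \<Rightarrow> real" where
  "frob X x = (\<Sum>i\<in>UNIV. \<Sum>j\<in>UNIV. X$i$j * x$i$j)"

definition perm_weight :: "real^'n^'n \<Rightarrow> ('n \<Rightarrow> 'n) \<Rightarrow> real" where
  "perm_weight X p = (\<Sum>i\<in>UNIV. X$i$(p i))"

lemma perm_matrices_eq_pmat_image: "perm_matrices = pmat ` {p. p permutes UNIV}"
  by (auto simp: perm_matrices_def pmat_def)

lemma pmat_entry_cases: "pmat p $ i $ j = 0 \<or> pmat p $ i $ j = 1"
  by (simp add: pmat_def)

lemma frob_pmat: "frob X (pmat p) = perm_weight X p"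
proof -
  have "(\<Sum>j\<in>UNIV. X$i$j * (if p i = j then 1 else 0)) = X$i$(p i)" for i
    by (simp add: if_distrib cong: if_cong)
  then show ?thesis by (simp add: frob_def pmat_def perm_weight_def)
qed

lemma sum_permutes_indicator:
  assumes "p permutes (UNIV :: 'n::finite set)"
  shows "(\<Sum>i\<in>UNIV. if p i = j then 1 else 0 :: real) = 1"
proof -
  have "(\<Sum>i\<in>UNIV. if p i = j then 1 else 0 :: real) = (\<Sum>i\<in>UNIV. if i = inv p j then 1 else 0)"
    by (intro sum.cong refl) (metis permutes_inv_eq[OF assms])
  then show ?thesis by simp
qed

lemma pmat_doubly_stochastic:
  fixes p :: "'n::finite \<Rightarrow> 'n"
  assumes "p permutes UNIV"
  shows "pmat p \<in> doubly_stochastic"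
  using sum_permutes_indicator[OF assms] by (simp add: doubly_stochastic_def pmat_def)

lemma doubly_stochastic_nonneg: "x \<in> doubly_stochastic \<Longrightarrow> 0 \<le> x$i$j"
  by (simp add: doubly_stochastic_def)

lemma doubly_stochastic_row: "x \<in> doubly_stochastic \<Longrightarrow> (\<Sum>j\<in>UNIV. x$i$j) = 1"
  by (simp add: doubly_stochastic_def)

lemma doubly_stochastic_col: "x \<in> doubly_stochastic \<Longrightarrow> (\<Sum>i\<in>UNIV. x$i$j) = 1"
  by (simp add: doubly_stochastic_def)

lemma doubly_stochastic_le_1:
  fixes x :: "real^'n::finite^'n"
  assumes "x \<in> doubly_stochastic"
  shows "x$i$j \<le> 1"
proof -
  have "x$i$j \<le> (\<Sum>j\<in>UNIV. x$i$j)"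
    by (rule member_le_sum) (auto simp: doubly_stochastic_nonneg[OF assms])
  then show ?thesis using doubly_stochastic_row[OF assms] by simp
qed

subsection \<open>Signed cycles in the support graph\<close>

lemma nonbacktracking_walk_exists:
  fixes adj :: "'a \<Rightarrow> 'a \<Rightarrow> bool"
  assumes extend: "\<And>u w. adj u w \<Longrightarrow> \<exists>z. adj w z \<and> z \<noteq> u"
    and start: "adj u0 w0"
  obtains v :: "nat \<Rightarrow> 'a"
  where "v 0 = u0" "\<And>k. adj (v k) (v (Suc k))" "\<And>k. v (Suc (Suc k)) \<noteq> v k"
proof -
  define next_edge where
    "next_edge = (\<lambda>(u, w). (w, SOME z. adj w z \<and> z \<noteq> u))"
  define edge where "edge k = (next_edge ^^ k) (u0, w0)" for k
  have next_edge: "adj w (snd (next_edge (u, w))) \<and> snd (next_edge (u, w)) \<noteq> u"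
    if "adj u w" for u w
    using someI_ex[OF extend[OF that]] by (simp add: next_edge_def)
  have edge_adj: "adj (fst (edge k)) (snd (edge k))" for k
  proof (induction k)
    case 0 then show ?case using start by (simp add: edge_def)
  next
    case (Suc k)
    then show ?case
      using next_edge[of "fst (edge k)" "snd (edge k)"]
      by (simp add: edge_def next_edge_def case_prod_unfold)
  qed
  define v where "v k = fst (edge k)" for k
  have snd_edge: "snd (edge k) = v (Suc k)" for k
    by (simp add: v_def edge_def next_edge_def case_prod_unfold)
  show ?thesis
  proof
    show "v 0 = u0" by (simp add: v_def edge_def)
    show "adj (v k) (v (Suc k))" for k using edge_adj[of k] by (simp add: snd_edge v_def)
    show "v (Suc (Suc k)) \<noteq> v k" for k
      using next_edge[OF edge_adj[of k]]
      by (simp add: v_def edge_def next_edge_def case_prod_unfold)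
  qed
qed

lemma first_repetition:
  fixes v :: "nat \<Rightarrow> 'a::finite"
  obtains k m where "k < m" "v k = v m" "\<And>l k'. l < m \<Longrightarrow> k' < l \<Longrightarrow> v k' \<noteq> v l"
proof -
  have "\<not> inj_on v {..CARD('a)}"
  proof
    assume "inj_on v {..CARD('a)}"
    then have "card (v ` {..CARD('a)}) = Suc CARD('a)" by (simp add: card_image)
    moreover have "card (v ` {..CARD('a)}) \<le> CARD('a)" by (rule card_mono) auto
    ultimately show False by simp
  qed
  then have ex: "\<exists>m. \<exists>k<m. v k = v m"
    unfolding inj_on_def by (metis linorder_neqE_nat)
  define m where "m = (LEAST m. \<exists>k<m. v k = v m)"
  obtain k where "k < m" "v k = v m" using LeastI_ex[OF ex] by (auto simp: m_def)
  moreover have "v k' \<noteq> v l" if "l < m" "k' < l" for l k'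
    using not_less_Least[of l "\<lambda>m. \<exists>k<m. v k = v m"] that by (auto simp: m_def)
  ultimately show ?thesis using that by blast
qed

lemma alternating_sum_telescope:
  fixes g :: "nat \<Rightarrow> real"
  assumes "k \<le> m" "g k = g m" "even k \<longleftrightarrow> even m"
  shows "(\<Sum>l\<in>{k..<m}. (-1)^l * (g l + g (Suc l))) = 0"
proof -
  define b where "b l = (-1::real)^l * g l" for l
  have "(\<Sum>l\<in>{k..<m}. (-1)^l * (g l + g (Suc l))) = (\<Sum>l\<in>{k..<m}. b l - b (Suc l))"
    by (intro sum.cong refl) (simp add: b_def algebra_simps)
  also have "\<dots> = b k - b m" using sum_Suc_diff'[OF assms(1), of b] by (simp add: sum_subtractf)
  also have "\<dots> = 0"
    using assms(2,3) by (cases "even k") (simp_all add: b_def)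
  finally show ?thesis .
qed

text \<open>Rows and columns are the two sides of a bipartite graph whose edges are the pairs in F.\<close>

definition bip_adj :: "('n \<times> 'n) set \<Rightarrow> 'n + 'n \<Rightarrow> 'n + 'n \<Rightarrow> bool" where
  "bip_adj F u w = (case (u, w) of (Inl i, Inr j) \<Rightarrow> (i, j) \<in> F | (Inr j, Inl i) \<Rightarrow> (i, j) \<in> F
                                  | _ \<Rightarrow> False)"

definition edge_entry :: "'n + 'n \<Rightarrow> 'n + 'n \<Rightarrow> 'n \<times> 'n" where
  "edge_entry u w = (case (u, w) of (Inr j, Inl i) \<Rightarrow> (i, j) | _ \<Rightarrow> (projl u, projr w))"

lemma bip_adjE:
  assumes "bip_adj F u w"
  obtains i j where "u = Inl i" "w = Inr j" "(i, j) \<in> F"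
    | i j where "u = Inr j" "w = Inl i" "(i, j) \<in> F"
  using assms unfolding bip_adj_def by (auto split: sum.splits)

lemma bip_adj_edge_entry:
  assumes "bip_adj F u w"
  shows "edge_entry u w \<in> F"
    and "(if fst (edge_entry u w) = i then 1 else 0 :: real)
           = (if u = Inl i then 1 else 0) + (if w = Inl i then 1 else 0)"
    and "(if snd (edge_entry u w) = j then 1 else 0 :: real)
           = (if u = Inr j then 1 else 0) + (if w = Inr j then 1 else 0)"
    and "isl w \<longleftrightarrow> \<not> isl u"
  using assms by (elim bip_adjE; simp add: edge_entry_def)+

lemma bip_adj_edge_entry_inj:
  assumes "bip_adj F u w" "bip_adj F u' w'" "edge_entry u w = edge_entry u' w'"
  shows "(u = u' \<and> w = w') \<or> (u = w' \<and> w = u')"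
  using assms by (elim bip_adjE) (auto simp: edge_entry_def)

lemma bip_adj_extend:
  assumes row: "\<And>i j. (i, j) \<in> F \<Longrightarrow> \<exists>j'. j' \<noteq> j \<and> (i, j') \<in> F"
    and col: "\<And>i j. (i, j) \<in> F \<Longrightarrow> \<exists>i'. i' \<noteq> i \<and> (i', j) \<in> F"
    and "bip_adj F u w"
  shows "\<exists>z. bip_adj F w z \<and> z \<noteq> u"
  using assms(3)
proof (cases rule: bip_adjE)
  case (1 i j)
  then obtain i' where "i' \<noteq> i" "(i', j) \<in> F" using col by blast
  then show ?thesis using 1 by (intro exI[of _ "Inl i'"]) (auto simp: bip_adj_def)
next
  case (2 i j)
  then obtain j' where "j' \<noteq> j" "(i, j') \<in> F" using row by blast
  then show ?thesis using 2 by (intro exI[of _ "Inr j'"]) (auto simp: bip_adj_def)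
qed

definition signed_walk_matrix :: "(nat \<Rightarrow> 'n + 'n) \<Rightarrow> nat \<Rightarrow> nat \<Rightarrow> real^'n^'n" where
  "signed_walk_matrix v k m =
     (\<chi> i j. \<Sum>l\<in>{k..<m}. (-1)^l * (if edge_entry (v l) (v (Suc l)) = (i, j) then 1 else 0))"

lemma signed_walk_matrix_margins:
  fixes v :: "nat \<Rightarrow> 'n::finite + 'n"
  assumes adj: "\<And>l. bip_adj F (v l) (v (Suc l))"
    and walk: "k \<le> m" "v k = v m" "even k \<longleftrightarrow> even m"
  shows "(\<Sum>j\<in>UNIV. signed_walk_matrix v k m $i$j) = 0"
    and "(\<Sum>i\<in>UNIV. signed_walk_matrix v k m $i$j) = 0"
proof -
  define e where "e l = edge_entry (v l) (v (Suc l))" for l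
  have "(\<Sum>j\<in>UNIV. signed_walk_matrix v k m $i$j)
      = (\<Sum>l\<in>{k..<m}. (-1)^l * (\<Sum>j\<in>UNIV. if e l = (i, j) then 1 else 0))"
    unfolding signed_walk_matrix_def e_def by (simp add: sum_distrib_left) (rule sum.swap)
  also have "\<dots> = (\<Sum>l\<in>{k..<m}. (-1)^l * (if fst (e l) = i then 1 else 0))"
    by (intro sum.cong refl) (auto simp: prod_eq_iff)
  also have "\<dots> = 0"
    unfolding e_def bip_adj_edge_entry(2)[OF adj] using walk by (intro alternating_sum_telescope) auto
  finally show "(\<Sum>j\<in>UNIV. signed_walk_matrix v k m $i$j) = 0" .
  have "(\<Sum>i\<in>UNIV. signed_walk_matrix v k m $i$j)
      = (\<Sum>l\<in>{k..<m}. (-1)^l * (\<Sum>i\<in>UNIV. if e l = (i, j) then 1 else 0))"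
    unfolding signed_walk_matrix_def e_def by (simp add: sum_distrib_left) (rule sum.swap)
  also have "\<dots> = (\<Sum>l\<in>{k..<m}. (-1)^l * (if snd (e l) = j then 1 else 0))"
    by (intro sum.cong refl) (auto simp: prod_eq_iff)
  also have "\<dots> = 0"
    unfolding e_def bip_adj_edge_entry(3)[OF adj] using walk by (intro alternating_sum_telescope) auto
  finally show "(\<Sum>i\<in>UNIV. signed_walk_matrix v k m $i$j) = 0" .
qed

text \<open>The nonzero matrix is a cycle of the support graph of F with alternating signs \<open>\<plusminus>1\<close>;
  a cycle exists because every vertex met by an edge has a second edge.\<close>

lemma zero_margin_matrix_exists:
  fixes F :: "('n::finite \<times> 'n) set"
  assumes "F \<noteq> {}"
    and row: "\<And>i j. (i, j) \<in> F \<Longrightarrow> \<exists>j'. j' \<noteq> j \<and> (i, j') \<in> F"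
    and col: "\<And>i j. (i, j) \<in> F \<Longrightarrow> \<exists>i'. i' \<noteq> i \<and> (i', j) \<in> F"
  shows "\<exists>E :: real^'n^'n. E \<noteq> 0 \<and> (\<forall>i. (\<Sum>j\<in>UNIV. E$i$j) = 0)
           \<and> (\<forall>j. (\<Sum>i\<in>UNIV. E$i$j) = 0) \<and> (\<forall>i j. E$i$j \<noteq> 0 \<longrightarrow> (i, j) \<in> F)"
proof -
  obtain i0 j0 where "(i0, j0) \<in> F" using assms(1) by auto
  then have start: "bip_adj F (Inl i0) (Inr j0)" by (simp add: bip_adj_def)
  obtain v where v0: "v 0 = Inl i0" and adj: "\<And>k. bip_adj F (v k) (v (Suc k))"
    and nonback: "\<And>k. v (Suc (Suc k)) \<noteq> v k"
    using nonbacktracking_walk_exists[where adj = "bip_adj F", OF bip_adj_extend[OF row col] start]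
    by blast
  have parity: "isl (v k) \<longleftrightarrow> even k" for k
  proof (induction k)
    case (Suc k)
    then show ?case using bip_adj_edge_entry(4)[OF adj[of k]] by simp
  qed (simp add: v0)
  obtain k m where km: "k < m" "v k = v m"
    and first: "\<And>l k'. l < m \<Longrightarrow> k' < l \<Longrightarrow> v k' \<noteq> v l"
    using first_repetition[of v] by blast
  have even_km: "even k \<longleftrightarrow> even m" using parity[of k] parity[of m] km(2) by simp
  define e where "e l = edge_entry (v l) (v (Suc l))" for l
  define E where "E = signed_walk_matrix v k m"
  have E_row: "(\<Sum>j\<in>UNIV. E$i$j) = 0" and E_col: "(\<Sum>i\<in>UNIV. E$i$j) = 0" for i j
    unfolding E_def using signed_walk_matrix_margins[where v = v, OF adj] km even_km by auto
  have E_supp: "(i, j) \<in> F" if "E$i$j \<noteq> 0" for i j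
  proof -
    have "\<exists>l. e l = (i, j)"
    proof (rule ccontr)
      assume "\<nexists>l. e l = (i, j)"
      then have "E$i$j = 0" by (simp add: E_def signed_walk_matrix_def e_def)
      with that show False by simp
    qed
    then obtain l where "e l = (i, j)" by blast
    then show ?thesis using bip_adj_edge_entry(1)[OF adj[of l]] by (simp add: e_def)
  qed
  have e_simple: "e l \<noteq> e k" if "k < l" "l < m" for l
  proof
    assume "e l = e k"
    then consider "v l = v k" | "v l = v (Suc k)" "v (Suc l) = v k"
      using bip_adj_edge_entry_inj[OF adj[of l] adj[of k]] by (auto simp: e_def)
    then show False
    proof cases
      case 2
      then show False using first[of l "Suc k"] nonback[of k] that by (cases "l = Suc k") auto
    qed (use first[of l k] that in auto)
  qed
  have "E $ fst (e k) $ snd (e k) = (\<Sum>l\<in>{k..<m}. (-1)^l * (if e l = e k then 1 else 0))"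
    by (simp add: E_def signed_walk_matrix_def e_def)
  also have "\<dots> = (\<Sum>l\<in>{k..<m}. if l = k then (-1)^k else 0)"
    using e_simple by (intro sum.cong refl) force
  also have "\<dots> \<noteq> 0" using km(1) by simp
  finally have "E \<noteq> 0" by auto
  with E_row E_col E_supp show ?thesis by blast
qed

definition fractional_entries :: "real^'n^'n \<Rightarrow> ('n \<times> 'n) set" where
  "fractional_entries x = {(i, j). 0 < x$i$j \<and> x$i$j < 1}"

lemma fractional_summand_has_partner:
  fixes f :: "'a::finite \<Rightarrow> real"
  assumes unit: "\<And>k. 0 \<le> f k \<and> f k \<le> 1" and sum: "sum f UNIV = 1"
    and frac: "0 < f a" "f a < 1"
  shows "\<exists>b. b \<noteq> a \<and> 0 < f b \<and> f b < 1"
proof (rule ccontr)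
  assume "\<nexists>b. b \<noteq> a \<and> 0 < f b \<and> f b < 1"
  then have "f b \<in> \<int>" if "b \<noteq> a" for b
    using unit[of b] that by (metis Ints_0 Ints_1 antisym_conv1 antisym_conv2)
  then have "(\<Sum>b\<in>UNIV - {a}. f b) \<in> \<int>" by (intro Ints_sum) auto
  moreover have "f a = 1 - (\<Sum>b\<in>UNIV - {a}. f b)"
    using sum sum.remove[of UNIV a f] by simp
  ultimately have "f a \<in> \<int>" by simp
  with frac show False
    by (metis Ints_cases of_int_0_less_iff of_int_less_1_iff not_less zero_less_iff_neq_zero
        int_one_le_iff_zero_less)
qed

lemma doubly_stochastic_eq_pmat:
  fixes x :: "real^'n::finite^'n"
  assumes ds: "x \<in> doubly_stochastic" and "fractional_entries x = {}"
  shows "\<exists>p. p permutes UNIV \<and> x = pmat p"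
proof -
  have entry: "x$i$j = 0 \<or> x$i$j = 1" for i j
  proof -
    have "(i, j) \<notin> fractional_entries x" using assms(2) by simp
    then show ?thesis
      using doubly_stochastic_nonneg[OF ds, of i j] doubly_stochastic_le_1[OF ds, of i j]
      by (auto simp: fractional_entries_def)
  qed
  have two_le_sum: "2 \<le> sum f UNIV"
    if "\<And>k. 0 \<le> f k" "a \<noteq> b" "f a = 1" "f b = 1" for f :: "'n \<Rightarrow> real" and a b
  proof -
    have "sum f {a, b} \<le> sum f UNIV" by (rule sum_mono2) (auto simp: that)
    then show ?thesis using that by simp
  qed
  have "\<exists>j. x$i$j = 1" for i
    using entry doubly_stochastic_row[OF ds, of i] by (metis (no_types) sum.neutral zero_neq_one)
  then obtain p where p: "x$i$(p i) = 1" for i by metis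
  have x_eq: "x = pmat p"
  proof -
    have "x$i$j = 0" if "p i \<noteq> j" for i j
      using entry[of i j] two_le_sum[of "\<lambda>j. x$i$j" j "p i"] that p[of i]
        doubly_stochastic_nonneg[OF ds] doubly_stochastic_row[OF ds, of i] by force
    then show ?thesis using p by (auto simp: pmat_def vec_eq_iff)
  qed
  have "inj p"
  proof (rule injI, rule ccontr)
    fix a b assume "p a = p b" "a \<noteq> b"
    then have "2 \<le> (\<Sum>i\<in>UNIV. x$i$(p b))"
      using two_le_sum[of "\<lambda>i. x$i$(p b)" a b] p doubly_stochastic_nonneg[OF ds] by metis
    then show False using doubly_stochastic_col[OF ds] by simp
  qed
  then have "p permutes UNIV" by (intro inj_imp_permutes) auto
  with x_eq show ?thesis by blast
qed

text \<open>Move along E as far as nonnegativity allows; the entry that limits the step drops to 0.\<close>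

lemma doubly_stochastic_move_to_boundary:
  fixes x E :: "real^'n::finite^'n"
  assumes ds: "x \<in> doubly_stochastic" and "E \<noteq> 0"
    and row: "\<And>i. (\<Sum>j\<in>UNIV. E$i$j) = 0" and col: "\<And>j. (\<Sum>i\<in>UNIV. E$i$j) = 0"
    and supp: "\<And>i j. E$i$j \<noteq> 0 \<Longrightarrow> (i, j) \<in> fractional_entries x"
  obtains t where "0 < t" "x + t *\<^sub>R E \<in> doubly_stochastic"
    "fractional_entries (x + t *\<^sub>R E) \<subset> fractional_entries x"
proof -
  define N where "N = {q. E $ fst q $ snd q < 0}"
  have "N \<noteq> {}"
  proof
    assume "N = {}"
    then have "(i, j) \<notin> N" for i j by simp
    then have "0 \<le> E$i$j" for i j by (simp add: N_def not_less)
    then have "E$i$j = 0" for i j using row[of i] by (simp add: sum_nonneg_eq_0_iff)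
    with \<open>E \<noteq> 0\<close> show False by (simp add: vec_eq_iff)
  qed
  define g where "g q = x $ fst q $ snd q / - E $ fst q $ snd q" for q
  define t where "t = Min (g ` N)"
  have "t \<in> g ` N" unfolding t_def using \<open>N \<noteq> {}\<close> by (intro Min_in) auto
  then obtain i0 j0 where ij0: "(i0, j0) \<in> N" "t = g (i0, j0)" by auto
  have t_le: "t \<le> g q" if "q \<in> N" for q unfolding t_def using that by simp
  have "(i0, j0) \<in> fractional_entries x" using ij0(1) supp by (force simp: N_def)
  then have "0 < t" using ij0 by (auto simp: g_def N_def fractional_entries_def divide_pos_neg)
  define y where "y = x + t *\<^sub>R E"
  have y_entry: "y$i$j = x$i$j + t * E$i$j" for i j by (simp add: y_def)
  have "0 \<le> y$i$j" for i j
  proof (cases "E$i$j < 0")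
    case True
    then have "t \<le> x$i$j / - E$i$j" using t_le[of "(i, j)"] by (simp add: N_def g_def)
    with True show ?thesis by (simp add: y_entry field_simps)
  next
    case False
    then show ?thesis using \<open>0 < t\<close> doubly_stochastic_nonneg[OF ds, of i j] by (simp add: y_entry)
  qed
  moreover have "(\<Sum>j\<in>UNIV. y$i$j) = 1" "(\<Sum>i\<in>UNIV. y$i$j) = 1" for i j
    using doubly_stochastic_row[OF ds, of i] doubly_stochastic_col[OF ds, of j] row[of i] col[of j]
    by (simp_all add: y_entry sum.distrib sum_distrib_left[symmetric])
  ultimately have "y \<in> doubly_stochastic" by (simp add: doubly_stochastic_def)
  moreover have "fractional_entries y \<subseteq> fractional_entries x - {(i0, j0)}"
    using supp ij0 \<open>0 < t\<close>
    by (force simp: fractional_entries_def y_entry N_def g_def)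
  ultimately show ?thesis
    using that \<open>0 < t\<close> \<open>(i0, j0) \<in> fractional_entries x\<close> unfolding y_def by blast
qed

lemma birkhoff_frob_le_pmat:
  fixes x X :: "real^'n::finite^'n"
  assumes "x \<in> doubly_stochastic"
  shows "\<exists>p. p permutes UNIV \<and> frob X x \<le> frob X (pmat p)"
  using assms
proof (induction "card (fractional_entries x)" arbitrary: x rule: less_induct)
  case less
  show ?case
  proof (cases "fractional_entries x = {}")
    case True
    then show ?thesis using doubly_stochastic_eq_pmat[OF less.prems] by auto
  next
    case False
    have unit: "0 \<le> x$i$j \<and> x$i$j \<le> 1" for i j
      using less.prems doubly_stochastic_nonneg doubly_stochastic_le_1 by blast
    obtain E :: "real^'n^'n" where E: "E \<noteq> 0" "\<And>i. (\<Sum>j\<in>UNIV. E$i$j) = 0"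
      "\<And>j. (\<Sum>i\<in>UNIV. E$i$j) = 0" "\<And>i j. E$i$j \<noteq> 0 \<Longrightarrow> (i, j) \<in> fractional_entries x"
      using zero_margin_matrix_exists[OF False]
        fractional_summand_has_partner[of "\<lambda>j. x$_$j", OF unit doubly_stochastic_row[OF less.prems]]
        fractional_summand_has_partner[of "\<lambda>i. x$i$_", OF unit doubly_stochastic_col[OF less.prems]]
      by (simp add: fractional_entries_def) blast
    define E' where "E' = (if 0 \<le> frob X E then E else - E)"
    have "E' \<noteq> 0" "\<And>i. (\<Sum>j\<in>UNIV. E'$i$j) = 0" "\<And>j. (\<Sum>i\<in>UNIV. E'$i$j) = 0"
      "\<And>i j. E'$i$j \<noteq> 0 \<Longrightarrow> (i, j) \<in> fractional_entries x"
      using E by (auto simp: E'_def sum_negf split: if_split_asm)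
    then obtain t where t: "0 < t" "x + t *\<^sub>R E' \<in> doubly_stochastic"
      "fractional_entries (x + t *\<^sub>R E') \<subset> fractional_entries x"
      by (rule doubly_stochastic_move_to_boundary[OF less.prems])
    then obtain p where "p permutes UNIV" "frob X (x + t *\<^sub>R E') \<le> frob X (pmat p)"
      using less.hyps by (meson finite psubset_card_mono)
    moreover have "frob X (x + t *\<^sub>R E') = frob X x + t * frob X E'"
      by (simp add: frob_def algebra_simps sum.distrib sum_distrib_left)
    moreover have "0 \<le> frob X E'" by (simp add: E'_def frob_def sum_negf)
    ultimately show ?thesis using t(1) by (smt (verit) mult_nonneg_nonneg)
  qed
qed

section \<open>Projection onto the cone\<close>

definition cone_point :: "real^'n^'n \<Rightarrow> real^'n \<Rightarrow> real^'n \<Rightarrow> real^'n^'n" where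
  "cone_point c w w' = (\<chi> i j. (w$i + w'$j) / c$i$j)"

lemma cone_K_eq: "cone_K c = {cone_point c w w' | w w'. (\<forall>i. 0 \<le> w$i) \<and> (\<forall>j. 0 \<le> w'$j)}"
  by (auto simp: cone_K_def cone_point_def)

context
  fixes c :: "real^'n::finite^'n"
  assumes cpos: "\<forall>i j. 0 < c$i$j"
begin

lemma cone_point_coeff_le:
  assumes "cnorm c (cone_point c w w') \<le> B"
  shows "w$i + w'$j \<le> B * sqrt (c$i$j)"
proof -
  have cij: "0 < c$i$j" using cpos by simp
  have B: "0 \<le> B" using assms cnorm_nonneg[OF cpos, of "cone_point c w w'"] by linarith
  have "(cnorm c (cone_point c w w'))^2 \<le> B^2"
    using assms cnorm_nonneg[OF cpos] by (rule power_mono)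
  with cnorm_entry_le[OF cpos, of i j "cone_point c w w'"]
  have "c$i$j * ((w$i + w'$j) / c$i$j)^2 \<le> B^2" by (simp add: cone_point_def)
  then have "c$i$j * (w$i + w'$j)^2 \<le> c$i$j * (B^2 * c$i$j)"
    using cij by (simp add: power_divide field_simps power2_eq_square)
  then have "(w$i + w'$j)^2 \<le> B^2 * c$i$j" using cij by (rule mult_left_le_imp_le)
  then have "(w$i + w'$j)^2 \<le> (B * sqrt (c$i$j))^2"
    using cij by (simp add: power_mult_distrib)
  moreover have "0 \<le> B * sqrt (c$i$j)" using B cij by simp
  ultimately show ?thesis by (rule power2_le_imp_le)
qed

lemma proj_K_exists: "\<exists>y\<in>cone_K c. \<forall>z\<in>cone_K c. cnorm c (x - y) \<le> cnorm c (x - z)"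
proof -
  text \<open>Minimizers lie in the compact set of cone points with coefficients at most R.\<close>
  define B where "B = 2 * cnorm c x"
  define R where "R = B * (\<Sum>i\<in>UNIV. \<Sum>j\<in>UNIV. sqrt (c$i$j))"
  define S where "S = cbox (0::real^'n) (\<chi> i. R) \<times> cbox (0::real^'n) (\<chi> i. R)"
  define f where "f p = cnorm c (x - cone_point c (fst p) (snd p))" for p
  have "0 \<le> R" unfolding R_def B_def using cpos
    by (intro mult_nonneg_nonneg sum_nonneg) (auto simp: cnorm_nonneg[OF cpos] less_imp_le)
  then have S0: "(0, 0) \<in> S" by (simp add: S_def interval_cart)
  have "continuous_on S f"
    unfolding f_def cnorm_eq_norm_cscale[OF cpos] cscale_def cone_point_def
    by (intro continuous_intros) (use cpos in \<open>auto simp: dual_order.strict_implies_not_eq\<close>)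
  then obtain p where pS: "p \<in> S" and pmin: "\<forall>q\<in>S. f p \<le> f q"
    using continuous_attains_inf[of S f] S0 by (auto simp: S_def compact_Times)
  have "cone_point c (fst p) (snd p) \<in> cone_K c"
    using pS unfolding cone_K_eq S_def by (auto simp: interval_cart mem_Times_iff)
  moreover have "cnorm c (x - cone_point c (fst p) (snd p)) \<le> cnorm c (x - z)" if z: "z \<in> cone_K c" for z
  proof (cases "cnorm c (x - z) \<le> cnorm c x")
    case False
    have "f p \<le> f (0, 0)" using pmin S0 by blast
    moreover have "cone_point c 0 0 = 0" by (simp add: cone_point_def vec_eq_iff)
    ultimately show ?thesis using False by (simp add: f_def)
  next
    case True
    obtain w w' where ww: "\<forall>i. 0 \<le> w$i" "\<forall>j. 0 \<le> w'$j" "z = cone_point c w w'"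
      using z unfolding cone_K_eq by blast
    have "cnorm c z \<le> cnorm c x + cnorm c (x - z)"
      using cnorm_triangle[OF cpos, of x "z - x"] cnorm_minus_commute[OF cpos, of x z] by simp
    then have "cnorm c z \<le> B" using True by (simp add: B_def)
    then have coeff: "w$i + w'$j \<le> B * sqrt (c$i$j)" for i j
      using cone_point_coeff_le ww(3) by blast
    have "B * sqrt (c$i$j) \<le> R" for i j
      unfolding R_def using cpos
      by (intro mult_left_mono entry_le_double_sum[where f = "\<lambda>i j. sqrt (c$i$j)"])
        (auto simp: B_def cnorm_nonneg[OF cpos] less_imp_le)
    with coeff ww have "w$i \<le> R" "w'$j \<le> R" for i j
      by (smt (verit))+
    then have "(w, w') \<in> S" using ww by (simp add: S_def interval_cart)
    then show ?thesis using pmin ww(3) by (auto simp: f_def)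
  qed
  ultimately show ?thesis by blast
qed

lemma proj_K_in_cone: "proj_K c x \<in> cone_K c"
  and cnorm_perp_K_le: "z \<in> cone_K c \<Longrightarrow> cnorm c (perp_K c x) \<le> cnorm c (x - z)"
proof -
  have "proj_K c x \<in> cone_K c \<and> (\<forall>z\<in>cone_K c. cnorm c (x - proj_K c x) \<le> cnorm c (x - z))"
    unfolding proj_K_def by (rule someI_ex) (use proj_K_exists in blast)
  then show "proj_K c x \<in> cone_K c" "z \<in> cone_K c \<Longrightarrow> cnorm c (perp_K c x) \<le> cnorm c (x - z)"
    by (simp_all add: perp_K_def)
qed

lemma cnorm_perp_K_lipschitz: "cnorm c (perp_K c x) \<le> cnorm c (x - y) + cnorm c (perp_K c y)"
proof -
  have "cnorm c (perp_K c x) \<le> cnorm c ((x - y) + perp_K c y)"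
    using cnorm_perp_K_le[OF proj_K_in_cone] by (simp add: perp_K_def)
  also have "\<dots> \<le> cnorm c (x - y) + cnorm c (perp_K c y)" by (rule cnorm_triangle[OF cpos])
  finally show ?thesis .
qed

lemma cone_K_nonneg: "y \<in> cone_K c \<Longrightarrow> 0 \<le> y$i$j"
  using cpos by (auto simp: cone_K_def intro!: divide_nonneg_pos add_nonneg_nonneg)

text \<open>Elements of the cone pair with every doubly stochastic matrix to \<open>\<Sum>w + \<Sum>w'\<close>.\<close>

lemma cinner_cone_doubly_stochastic_eq:
  assumes "y \<in> cone_K c" "x \<in> doubly_stochastic" "x' \<in> doubly_stochastic"
  shows "cinner c y x = cinner c y x'"
proof -
  obtain w w' :: "real^'n" where y: "y = cone_point c w w'"
    using assms(1) unfolding cone_K_eq by blast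
  have "cinner c y x = sum (($) w) UNIV + sum (($) w') UNIV" if "x \<in> doubly_stochastic" for x
  proof -
    have "cinner c y x = (\<Sum>i\<in>UNIV. \<Sum>j\<in>UNIV. w$i * x$i$j + w'$j * x$i$j)"
      unfolding cinner_def y cone_point_def using cpos
      by (intro sum.cong refl) (simp add: field_simps less_imp_neq[symmetric])
    also have "\<dots> = (\<Sum>i\<in>UNIV. w$i * (\<Sum>j\<in>UNIV. x$i$j)) + (\<Sum>j\<in>UNIV. w'$j * (\<Sum>i\<in>UNIV. x$i$j))"
      by (simp add: sum.distrib sum_distrib_left sum.swap[of "\<lambda>i j. w'$j * x$i$j"])
    also have "\<dots> = sum (($) w) UNIV + sum (($) w') UNIV"
      using that by (simp add: doubly_stochastic_row doubly_stochastic_col)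
    finally show ?thesis .
  qed
  with assms(2,3) show ?thesis by simp
qed

end

section \<open>Distance to the cone versus the MaxWeight gap\<close>

lemma rel_interior_doubly_stochastic_pos:
  fixes \<nu> :: "real^'n::finite^'n"
  assumes "\<nu> \<in> rel_interior doubly_stochastic"
  shows "0 < \<nu>$i$j"
proof (rule ccontr)
  assume "\<not> 0 < \<nu>$i$j"
  obtain e where e: "e > 0" "ball \<nu> e \<inter> affine hull doubly_stochastic \<subseteq> doubly_stochastic"
    and \<nu>: "\<nu> \<in> doubly_stochastic"
    using assms unfolding mem_rel_interior_ball by blast
  then have \<nu>0: "\<nu>$i$j = 0" using \<open>\<not> 0 < \<nu>$i$j\<close> doubly_stochastic_nonneg[OF \<nu>, of i j] by simp
  text \<open>Step slightly beyond \<open>\<nu>\<close>, away from a permutation matrix with a 1 at (i, j).\<close>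
  define P where "P = pmat (Transposition.transpose i j)"
  have P: "P \<in> doubly_stochastic"
    unfolding P_def by (rule pmat_doubly_stochastic) (simp add: permutes_swap_id)
  define t where "t = e / (2 * (norm (\<nu> - P) + 1))"
  have t: "0 < t" "t * norm (\<nu> - P) < e"
  proof -
    have pos: "0 < norm (\<nu> - P) + 1" by (smt (verit) norm_ge_zero)
    then show "0 < t" using e(1) by (simp add: t_def)
    then have "t * norm (\<nu> - P) \<le> t * (norm (\<nu> - P) + 1)" by simp
    also have "\<dots> = e / 2" using pos by (simp add: t_def field_simps)
    finally show "t * norm (\<nu> - P) < e" using e(1) by simp
  qed
  define z where "z = (1 + t) *\<^sub>R \<nu> + (- t) *\<^sub>R P"
  have "z \<in> affine hull doubly_stochastic"
    unfolding z_def by (rule mem_affine) (use \<nu> P in \<open>auto intro: hull_inc\<close>)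
  moreover have "dist \<nu> z = t * norm (\<nu> - P)"
    using t(1) by (simp add: z_def dist_norm algebra_simps norm_minus_commute
        flip: scaleR_diff_right)
  ultimately have "z \<in> doubly_stochastic" using e t(2) by auto
  moreover have "z$i$j < 0" using t(1) \<nu>0 by (simp add: z_def P_def pmat_def)
  ultimately show False using doubly_stochastic_nonneg[of z i j] by linarith
qed

lemma doubly_stochastic_uniform_lower_bound:
  fixes \<nu> :: "real^'n::finite^'n"
  assumes "\<nu> \<in> doubly_stochastic" "\<And>i j. 0 < \<nu>$i$j"
  obtains \<eta> where "0 < \<eta>" "\<eta> < 1" "\<And>i j. \<eta> \<le> \<nu>$i$j"
proof -
  define m where "m = Min (range (\<lambda>q. \<nu> $ fst q $ snd q))"
  have "m \<in> range (\<lambda>q. \<nu> $ fst q $ snd q)" unfolding m_def by (intro Min_in) auto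
  then have "0 < m" using assms(2) by auto
  have m_le: "m \<le> \<nu>$i$j" for i j unfolding m_def by (rule Min_le) (auto intro: range_eqI[of _ _ "(i, j)"])
  obtain i j :: 'n where True by blast
  have "m \<le> 1" using m_le[of i j] doubly_stochastic_le_1[OF assms(1), of i j] by simp
  moreover have "m / 2 \<le> \<nu>$i$j" for i j using m_le[of i j] \<open>0 < m\<close> by linarith
  ultimately show ?thesis using \<open>0 < m\<close> by (intro that[of "m / 2"]) auto
qed

definition pmat_avg :: "real^'n^'n" where
  "pmat_avg = (\<chi> i j. (\<Sum>p | p permutes UNIV. if p i = j then 1 else 0) / card {p. p permutes (UNIV::'n set)})"

lemma card_permutations_pos: "0 < card {p. p permutes (UNIV::'n::finite set)}"
  by (simp add: card_gt_0_iff finite_permutations) (use permutes_id in blast)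

lemma pmat_avg_doubly_stochastic: "(pmat_avg :: real^'n::finite^'n) \<in> doubly_stochastic"
proof -
  let ?P = "{p. p permutes (UNIV::'n set)}" and ?U = "pmat_avg :: real^'n^'n"
  have N: "card ?P \<noteq> 0" using card_permutations_pos[where 'n='n] by linarith
  have "(\<Sum>j\<in>UNIV. ?U$i$j) = 1" for i
  proof -
    have "(\<Sum>j\<in>UNIV. ?U$i$j) = (\<Sum>j\<in>UNIV. \<Sum>p\<in>?P. if p i = j then 1 else 0) / card ?P"
      by (simp add: pmat_avg_def sum_divide_distrib)
    also have "\<dots> = (\<Sum>p\<in>?P. \<Sum>j\<in>UNIV. if p i = j then 1 else 0) / card ?P"
      by (subst sum.swap) (rule refl)
    also have "\<dots> = 1" using N by simp
    finally show ?thesis .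
  qed
  moreover have "(\<Sum>i\<in>UNIV. ?U$i$j) = 1" for j
  proof -
    have "(\<Sum>i\<in>UNIV. ?U$i$j) = (\<Sum>i\<in>UNIV. \<Sum>p\<in>?P. if p i = j then 1 else 0) / card ?P"
      by (simp add: pmat_avg_def sum_divide_distrib)
    also have "\<dots> = (\<Sum>p\<in>?P. \<Sum>i\<in>UNIV. if p i = j then 1 else 0) / card ?P"
      by (subst sum.swap) (rule refl)
    also have "\<dots> = 1" using N by (simp add: sum_permutes_indicator)
    finally show ?thesis .
  qed
  ultimately show ?thesis by (simp add: doubly_stochastic_def pmat_avg_def sum_nonneg)
qed

lemma frob_pmat_avg:
  "frob X (pmat_avg :: real^'n::finite^'n)
     = (\<Sum>p | p permutes UNIV. perm_weight X p) / card {p. p permutes (UNIV::'n set)}"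
proof -
  have "frob X pmat_avg
     = (\<Sum>i\<in>UNIV. \<Sum>j\<in>UNIV. \<Sum>p | p permutes UNIV. X$i$j * (if p i = j then 1 else 0))
       / card {p. p permutes (UNIV::'n set)}"
    by (simp add: frob_def pmat_avg_def sum_divide_distrib[symmetric] sum_distrib_left)
  also have "\<dots> = (\<Sum>p | p permutes UNIV. frob X (pmat p)) / card {p. p permutes (UNIV::'n set)}"
    by (simp add: frob_def pmat_def sum.swap[where A="{p. p permutes UNIV}"])
  finally show ?thesis by (simp add: frob_pmat)
qed

lemma doubly_stochastic_split_pmat_avg:
  fixes \<nu> :: "real^'n::finite^'n"
  assumes \<nu>: "\<nu> \<in> doubly_stochastic" and \<eta>: "0 < \<eta>" "\<eta> < 1" "\<And>i j. \<eta> \<le> \<nu>$i$j"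
  obtains \<nu>' where "\<nu>' \<in> doubly_stochastic"
    "\<And>X. frob X \<nu> = (1 - \<eta>) * frob X \<nu>' + \<eta> * frob X pmat_avg"
proof
  define \<nu>' :: "real^'n^'n" where "\<nu>' = (\<chi> i j. (\<nu>$i$j - \<eta> * pmat_avg$i$j) / (1 - \<eta>))"
  have "\<eta> * pmat_avg$i$j \<le> \<eta>" for i j
    using doubly_stochastic_le_1[OF pmat_avg_doubly_stochastic] \<eta>(1) by (simp add: mult_left_le)
  then have "\<eta> * pmat_avg$i$j \<le> \<nu>$i$j" for i j using \<eta>(3)[of i j] order_trans by blast
  then have "0 \<le> \<nu>'$i$j" for i j
    using \<eta>(2) by (auto simp: \<nu>'_def intro!: divide_nonneg_pos)
  then show "\<nu>' \<in> doubly_stochastic"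
    using \<nu> pmat_avg_doubly_stochastic \<eta>(2)
    by (auto simp add: doubly_stochastic_def \<nu>'_def sum_divide_distrib[symmetric] sum_subtractf
        sum_distrib_left[symmetric])
  fix X :: "real^'n^'n"
  have "X$i$j * \<nu>$i$j = (1 - \<eta>) * (X$i$j * \<nu>'$i$j) + \<eta> * (X$i$j * pmat_avg$i$j)" for i j
    using \<eta>(2) by (simp add: \<nu>'_def field_simps)
  then show "frob X \<nu> = (1 - \<eta>) * frob X \<nu>' + \<eta> * frob X pmat_avg"
    by (simp add: frob_def sum.distrib sum_distrib_left)
qed

text \<open>Writing \<open>\<nu> = (1 - \<eta>) \<nu>' + \<eta> pmat_avg\<close> with \<open>\<nu>'\<close> doubly stochastic and applying Birkhoff
  to \<open>\<nu>'\<close> shows that \<open>\<nu>\<close> sees the weight of every permutation with weight at least \<open>\<eta> / n!\<close>.\<close>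

lemma perm_weight_gap_le:
  fixes \<nu> X :: "real^'n::finite^'n"
  assumes \<nu>: "\<nu> \<in> doubly_stochastic" and \<eta>: "0 < \<eta>" "\<eta> < 1" "\<And>i j. \<eta> \<le> \<nu>$i$j"
    and M: "\<And>p. p permutes UNIV \<Longrightarrow> perm_weight X p \<le> M"
    and p0: "p0 permutes UNIV"
  shows "M - perm_weight X p0 \<le> card {p. p permutes (UNIV::'n set)} / \<eta> * (M - frob X \<nu>)"
proof -
  let ?P = "{p. p permutes (UNIV::'n set)}"
  define N where "N = real (card ?P)"
  have N: "0 < N" using card_permutations_pos[where 'n='n] by (simp add: N_def)
  obtain \<nu>' where "\<nu>' \<in> doubly_stochastic" and split: "frob X \<nu> = (1 - \<eta>) * frob X \<nu>' + \<eta> * frob X pmat_avg"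
    using doubly_stochastic_split_pmat_avg[OF \<nu> \<eta>] by blast
  then obtain q where "q permutes UNIV" "frob X \<nu>' \<le> perm_weight X q"
    using birkhoff_frob_le_pmat by (metis frob_pmat)
  then have "frob X \<nu>' \<le> M" using M by fastforce
  then have "(1 - \<eta>) * frob X \<nu>' \<le> (1 - \<eta>) * M" using \<eta>(2) by (intro mult_left_mono) auto
  with split have "\<eta> * (M - frob X pmat_avg) \<le> M - frob X \<nu>" by (simp add: algebra_simps)
  moreover have "M - perm_weight X p0 \<le> N * (M - frob X pmat_avg)"
  proof -
    have "M - perm_weight X p0 \<le> (\<Sum>p\<in>?P. M - perm_weight X p)"
      by (rule member_le_sum) (use p0 M in auto)
    also have "\<dots> = N * (M - frob X pmat_avg)"
      using N by (simp add: frob_pmat_avg sum_subtractf N_def field_simps)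
    finally show ?thesis .
  qed
  ultimately have "\<eta> * (M - perm_weight X p0) \<le> N * (M - frob X \<nu>)"
    using \<eta>(1) N by (smt (verit, best) mult_left_mono mult.left_commute)
  then show ?thesis using \<eta>(1) unfolding N_def by (simp add: field_simps)
qed

lemma perm_weight_rectangle_diff:
  fixes X :: "real^'n::finite^'n"
  assumes "i \<noteq> i0" "j \<noteq> j0"
  obtains \<sigma> \<sigma>' where "\<sigma> permutes UNIV" "\<sigma>' permutes UNIV"
    "perm_weight X \<sigma> - perm_weight X \<sigma>' = X$i$j + X$i0$j0 - X$i$j0 - X$i0$j"
proof -
  define p where "p = Transposition.transpose i j"
  define \<sigma> where "\<sigma> = Transposition.transpose (p i0) j0 \<circ> p"
  define \<sigma>' where "\<sigma>' = Transposition.transpose j j0 \<circ> \<sigma>"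
  have p: "p permutes UNIV" unfolding p_def by (simp add: permutes_swap_id)
  have \<sigma>: "\<sigma> permutes UNIV" unfolding \<sigma>_def by (intro permutes_compose p permutes_swap_id) auto
  have \<sigma>': "\<sigma>' permutes UNIV" unfolding \<sigma>'_def by (intro permutes_compose \<sigma> permutes_swap_id) auto
  have "p i0 \<noteq> p i" using assms(1) permutes_inj[OF p] by (auto dest: injD)
  then have "p i0 \<noteq> j" by (simp add: p_def)
  then have \<sigma>_i: "\<sigma> i = j" and \<sigma>_i0: "\<sigma> i0 = j0"
    using assms(2) by (simp_all add: \<sigma>_def p_def transpose_apply_other)
  have \<sigma>'_other: "\<sigma>' k = \<sigma> k" if "k \<noteq> i" "k \<noteq> i0" for k
  proof -
    have "\<sigma> k \<noteq> j" "\<sigma> k \<noteq> j0"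
      using that \<sigma>_i \<sigma>_i0 permutes_inj[OF \<sigma>] by (auto dest: injD)
    then show ?thesis by (simp add: \<sigma>'_def transpose_apply_other)
  qed
  have "perm_weight X \<sigma> - perm_weight X \<sigma>' = (\<Sum>k\<in>{i, i0}. X$k$(\<sigma> k) - X$k$(\<sigma>' k))"
    unfolding perm_weight_def sum_subtractf[symmetric]
    by (rule sum.mono_neutral_right) (auto simp: \<sigma>'_other)
  also have "\<dots> = X$i$j + X$i0$j0 - X$i$j0 - X$i0$j"
    using assms(1) by (simp add: \<sigma>'_def \<sigma>_i \<sigma>_i0)
  finally show ?thesis using that \<sigma> \<sigma>' by blast
qed

lemma rectangle_defect_le:
  fixes X :: "real^'n::finite^'n"
  assumes "\<And>p. p permutes UNIV \<Longrightarrow> M - T \<le> perm_weight X p"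
    and "\<And>p. p permutes UNIV \<Longrightarrow> perm_weight X p \<le> M"
  shows "\<bar>X$i$j + X$i0$j0 - X$i$j0 - X$i0$j\<bar> \<le> T"
proof (cases "i = i0 \<or> j = j0")
  case True
  then show ?thesis using assms[of id] by auto
next
  case False
  then obtain \<sigma> \<sigma>' where "\<sigma> permutes UNIV" "\<sigma>' permutes UNIV"
    "perm_weight X \<sigma> - perm_weight X \<sigma>' = X$i$j + X$i0$j0 - X$i$j0 - X$i0$j"
    using perm_weight_rectangle_diff by blast
  with assms show ?thesis by (smt (verit))
qed

text \<open>Small rectangle defects make X uniformly close to \<open>w$i + w'$j\<close>; the only care needed
  is to keep both coefficient vectors nonnegative.\<close>

lemma approx_by_nonneg_row_col_sums:
  fixes X :: "real^'n::finite^'n"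
  assumes nonneg: "\<And>i j. 0 \<le> X$i$j"
    and defect: "\<And>i j. \<bar>X$i$j + X$i0$j0 - X$i$j0 - X$i0$j\<bar> \<le> T"
  obtains w w' :: "real^'n" where "\<forall>i. 0 \<le> w$i" "\<forall>j. 0 \<le> w'$j"
    "\<forall>i j. \<bar>X$i$j - w$i - w'$j\<bar> \<le> 2 * T"
proof -
  define a where "a k = X$k$j0" for k
  define b where "b l = X$i0$l - X$i0$j0" for l
  define \<alpha> where "\<alpha> = Min (range a)"
  define \<beta> where "\<beta> = Min (range b)"
  have "\<alpha> \<in> range a" "\<beta> \<in> range b" unfolding \<alpha>_def \<beta>_def by (intro Min_in; simp)+
  then obtain k1 l1 where k1: "a k1 = \<alpha>" and l1: "b l1 = \<beta>" by auto
  have \<alpha>_le: "\<alpha> \<le> a k" and \<beta>_le: "\<beta> \<le> b l" for k l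
    unfolding \<alpha>_def \<beta>_def by (rule Min_le; simp)+
  have T: "0 \<le> T" using defect[of i0 j0] by simp
  have "- T \<le> \<alpha> + \<beta>"
    using defect[of k1 l1] nonneg[of k1 l1] k1 l1 by (simp add: a_def b_def abs_le_iff)
  define w :: "real^'n" where "w = (\<chi> k. a k - \<alpha>)"
  define w' :: "real^'n" where "w' = (\<chi> l. max 0 (b l + \<alpha>))"
  have "\<bar>X$i$j - w$i - w'$j\<bar> \<le> 2 * T" for i j
  proof -
    have "\<bar>X$i$j - a i - b j\<bar> \<le> T" using defect[of i j] by (simp add: a_def b_def algebra_simps)
    moreover have "\<bar>(b j + \<alpha>) - max 0 (b j + \<alpha>)\<bar> \<le> T"
      using \<open>- T \<le> \<alpha> + \<beta>\<close> \<beta>_le[of j] T by (simp add: max_def abs_le_iff)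
    moreover have "X$i$j - w$i - w'$j = (X$i$j - a i - b j) + ((b j + \<alpha>) - max 0 (b j + \<alpha>))"
      by (simp add: w_def w'_def)
    ultimately show ?thesis by linarith
  qed
  moreover have "\<forall>i. 0 \<le> w$i" "\<forall>j. 0 \<le> w'$j" using \<alpha>_le by (simp_all add: w_def w'_def)
  ultimately show ?thesis using that by blast
qed

lemma cnorm_perp_K_le_uniform:
  fixes c Q :: "real^'n::finite^'n" and w w' :: "real^'n"
  assumes cpos: "\<forall>i j. 0 < c$i$j" and "\<forall>i. 0 \<le> w$i" "\<forall>j. 0 \<le> w'$j"
    and B: "\<And>i j. \<bar>c$i$j * Q$i$j - w$i - w'$j\<bar> \<le> B"
  shows "cnorm c (perp_K c Q) \<le> B * sqrt (\<Sum>i\<in>UNIV. \<Sum>j\<in>UNIV. 1 / c$i$j)"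
proof -
  obtain i j :: 'n where True by blast
  have "0 \<le> B" using B[of i j] by linarith
  define y where "y = cone_point c w w'"
  have "y \<in> cone_K c" unfolding y_def cone_K_eq using assms(2,3) by blast
  have "cinner c (Q - y) (Q - y) \<le> (\<Sum>i\<in>UNIV. \<Sum>j\<in>UNIV. B^2 * (1 / c$i$j))"
    unfolding cinner_def
  proof (intro sum_mono)
    fix i j
    have cij: "0 < c$i$j" using cpos by simp
    have "c$i$j * (Q - y)$i$j * (Q - y)$i$j = (c$i$j * Q$i$j - w$i - w'$j)^2 / c$i$j"
      using cij by (simp add: y_def cone_point_def field_simps power2_eq_square)
    also have "\<dots> \<le> B^2 / c$i$j"
      using power_mono[OF B[of i j] abs_ge_zero, of 2] cij by (simp add: divide_right_mono)
    finally show "c$i$j * (Q - y)$i$j * (Q - y)$i$j \<le> B^2 * (1 / c$i$j)" by simp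
  qed
  then have "cnorm c (Q - y) \<le> sqrt (B^2 * (\<Sum>i\<in>UNIV. \<Sum>j\<in>UNIV. 1 / c$i$j))"
    unfolding cnorm_def by (simp add: sum_distrib_left)
  also have "\<dots> = B * sqrt (\<Sum>i\<in>UNIV. \<Sum>j\<in>UNIV. 1 / c$i$j)"
    using \<open>0 \<le> B\<close> by (simp add: real_sqrt_mult)
  finally show ?thesis using cnorm_perp_K_le[OF cpos \<open>y \<in> cone_K c\<close>, of Q] by linarith
qed

definition gap_const :: "real^'n^'n \<Rightarrow> real \<Rightarrow> real" where
  "gap_const c \<eta> = 2 * card {p. p permutes (UNIV::'n set)} / \<eta> * sqrt (\<Sum>i\<in>UNIV. \<Sum>j\<in>UNIV. 1 / c$i$j)"

lemma gap_const_pos: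
  fixes c :: "real^'n::finite^'n"
  assumes "\<forall>i j. 0 < c$i$j" "0 < \<eta>"
  shows "0 < gap_const c \<eta>"
proof -
  have "0 < (\<Sum>i\<in>UNIV. \<Sum>j\<in>UNIV. 1 / c$i$j)" using assms(1) by (intro sum_pos) auto
  with assms(2) card_permutations_pos[where 'n='n] show ?thesis by (simp add: gap_const_def)
qed

lemma cinner_eq_frob: "cinner c Q x = frob (\<chi> i j. c$i$j * Q$i$j) x"
  by (simp add: cinner_def frob_def)

lemma cnorm_perp_K_le_gap:
  fixes c \<nu> Q :: "real^'n::finite^'n"
  assumes cpos: "\<forall>i j. 0 < c$i$j" and \<nu>: "\<nu> \<in> doubly_stochastic"
    and \<eta>: "0 < \<eta>" "\<eta> < 1" "\<And>i j. \<eta> \<le> \<nu>$i$j"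
    and Q: "\<And>i j. 0 \<le> Q$i$j"
    and M: "\<And>p. p permutes UNIV \<Longrightarrow> cinner c Q (pmat p) \<le> M"
  shows "cnorm c (perp_K c Q) \<le> gap_const c \<eta> * (M - cinner c Q \<nu>)"
proof -
  define X where "X = (\<chi> i j. c$i$j * Q$i$j)"
  define T where "T = card {p. p permutes (UNIV::'n set)} / \<eta> * (M - frob X \<nu>)"
  have M': "\<And>p. p permutes UNIV \<Longrightarrow> perm_weight X p \<le> M"
    using M by (simp add: cinner_eq_frob frob_pmat X_def)
  then have "M - T \<le> perm_weight X p" if "p permutes UNIV" for p
    using perm_weight_gap_le[OF \<nu> \<eta> M' that] by (simp add: T_def)
  then have defect: "\<bar>X$i$j + X$i0$j0 - X$i$j0 - X$i0$j\<bar> \<le> T" for i j i0 j0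
    using rectangle_defect_le M' by blast
  obtain i0 j0 :: 'n where True by blast
  have "0 \<le> X$i$j" for i j using cpos Q[of i j] by (simp add: X_def less_imp_le)
  then obtain w w' :: "real^'n" where "\<forall>i. 0 \<le> w$i" "\<forall>j. 0 \<le> w'$j"
    "\<forall>i j. \<bar>X$i$j - w$i - w'$j\<bar> \<le> 2 * T"
    using approx_by_nonneg_row_col_sums[of X i0 j0 T] defect by blast
  then have "cnorm c (perp_K c Q) \<le> 2 * T * sqrt (\<Sum>i\<in>UNIV. \<Sum>j\<in>UNIV. 1 / c$i$j)"
    by (intro cnorm_perp_K_le_uniform[OF cpos, of w w']) (simp_all add: X_def)
  also have "\<dots> = gap_const c \<eta> * (M - cinner c Q \<nu>)"
    by (simp add: T_def gap_const_def cinner_eq_frob X_def)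
  finally show ?thesis .
qed

section \<open>Stationary laws and Lyapunov functions\<close>

text \<open>Fatou's lemma gives \<open>\<pi> P \<le> \<pi>\<close> pointwise, and both sides have total mass one.\<close>

lemma pmf_limit_stationary:
  fixes qd :: "nat \<Rightarrow> 'a pmf" and P :: "'a \<Rightarrow> 'a pmf"
  assumes conv: "\<And>x. (\<lambda>t. pmf (qd t) x) \<longlonglongrightarrow> pmf \<pi> x"
    and step: "\<And>t. qd (Suc t) = bind_pmf (qd t) P"
  shows "bind_pmf \<pi> P = \<pi>"
proof -
  have le: "pmf (bind_pmf \<pi> P) x \<le> pmf \<pi> x" for x
  proof -
    have "ennreal (pmf (bind_pmf \<pi> P) x) = (\<integral>\<^sup>+y. ennreal (pmf \<pi> y * pmf (P y) x) \<partial>count_space UNIV)"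
      by (simp add: ennreal_pmf_bind nn_integral_measure_pmf ennreal_mult)
    also have "\<dots> = (\<integral>\<^sup>+y. liminf (\<lambda>t. ennreal (pmf (qd t) y * pmf (P y) x)) \<partial>count_space UNIV)"
    proof (intro nn_integral_cong)
      fix y
      have "(\<lambda>t. ennreal (pmf (qd t) y * pmf (P y) x)) \<longlonglongrightarrow> ennreal (pmf \<pi> y * pmf (P y) x)"
        by (intro tendsto_ennrealI tendsto_mult conv tendsto_const)
      then show "ennreal (pmf \<pi> y * pmf (P y) x) = liminf (\<lambda>t. ennreal (pmf (qd t) y * pmf (P y) x))"
        by (rule lim_imp_Liminf[OF trivial_limit_sequentially, symmetric])
    qed
    also have "\<dots> \<le> liminf (\<lambda>t. \<integral>\<^sup>+y. ennreal (pmf (qd t) y * pmf (P y) x) \<partial>count_space UNIV)"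
      by (rule nn_integral_liminf) simp
    also have "\<dots> = liminf (\<lambda>t. ennreal (pmf (qd (Suc t)) x))"
      by (simp add: step ennreal_pmf_bind nn_integral_measure_pmf ennreal_mult)
    also have "\<dots> = ennreal (pmf \<pi> x)"
      using tendsto_ennrealI[OF LIMSEQ_Suc[OF conv[of x]]]
      by (rule lim_imp_Liminf[OF trivial_limit_sequentially])
    finally show ?thesis by simp
  qed
  show ?thesis
  proof (rule pmf_eqI)
    fix x
    have "emeasure (measure_pmf (bind_pmf \<pi> P)) (UNIV - {x}) \<le> emeasure (measure_pmf \<pi>) (UNIV - {x})"
      unfolding nn_integral_pmf[symmetric] by (intro nn_integral_mono) (simp add: le)
    then have "measure (measure_pmf (bind_pmf \<pi> P)) (UNIV - {x}) \<le> measure (measure_pmf \<pi>) (UNIV - {x})"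
      by (simp add: measure_pmf.emeasure_eq_measure)
    then have "pmf \<pi> x \<le> pmf (bind_pmf \<pi> P) x"
      using measure_pmf.prob_compl[of "{x}" "bind_pmf \<pi> P"] measure_pmf.prob_compl[of "{x}" \<pi>]
      by (simp add: measure_pmf_single Compl_eq_Diff_UNIV)
    then show "pmf (bind_pmf \<pi> P) x = pmf \<pi> x" using le[of x] by simp
  qed
qed

lemma lyapunov_truncated_step:
  fixes P :: "'a \<Rightarrow> 'a pmf" and W :: "'a \<Rightarrow> real" and N :: nat
  assumes \<rho>: "0 \<le> \<rho>" "\<rho> < 1" and "0 \<le> \<kappa>"
    and drift: "\<And>x. \<kappa> < W x \<Longrightarrow> (\<integral>\<^sup>+y. ennreal (W y) \<partial>P x) \<le> ennreal (\<rho> * W x)"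
    and bounded: "\<And>x. W x \<le> \<kappa> \<Longrightarrow> (\<integral>\<^sup>+y. ennreal (W y) \<partial>P x) \<le> ennreal C"
  defines "F \<equiv> \<lambda>x. ennreal (min (W x) (real N))"
  shows "(\<integral>\<^sup>+y. F y \<partial>P x) + ennreal (1 - \<rho>) * (ennreal (W x) * indicator {y. \<kappa> < W y \<and> W y \<le> real N} x)
           \<le> F x + ennreal C"
proof -
  have F_le: "F y \<le> ennreal (W y)" "F y \<le> ennreal (real N)" for y
    by (simp_all add: F_def ennreal_leI)
  consider "\<kappa> < W x" "W x \<le> real N" | "W x \<le> \<kappa>" | "\<kappa> < W x" "real N < W x" by fastforce
  then show ?thesis
  proof cases
    case 1
    have "(\<integral>\<^sup>+y. F y \<partial>P x) \<le> (\<integral>\<^sup>+y. ennreal (W y) \<partial>P x)"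
      by (intro nn_integral_mono F_le(1))
    also have "\<dots> \<le> ennreal (\<rho> * W x)" by (rule drift[OF 1(1)])
    finally have "(\<integral>\<^sup>+y. F y \<partial>P x)
        + ennreal (1 - \<rho>) * (ennreal (W x) * indicator {y. \<kappa> < W y \<and> W y \<le> real N} x)
        \<le> ennreal (\<rho> * W x) + ennreal (1 - \<rho>) * ennreal (W x)"
      using 1 by (simp add: add_right_mono)
    also have "\<dots> = ennreal (\<rho> * W x + (1 - \<rho>) * W x)"
      using 1 \<rho> \<open>0 \<le> \<kappa>\<close> by (simp add: ennreal_mult[symmetric] ennreal_plus)
    also have "\<dots> = F x" using 1 by (simp add: F_def algebra_simps)
    finally show ?thesis by (simp add: add_increasing2)
  next
    case 2
    have "(\<integral>\<^sup>+y. F y \<partial>P x) \<le> (\<integral>\<^sup>+y. ennreal (W y) \<partial>P x)"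
      by (intro nn_integral_mono F_le(1))
    also have "\<dots> \<le> ennreal C" by (rule bounded[OF 2])
    finally show ?thesis using 2 by (simp add: add_increasing)
  next
    case 3
    have "(\<integral>\<^sup>+y. F y \<partial>P x) \<le> (\<integral>\<^sup>+y. ennreal (real N) \<partial>P x)"
      by (intro nn_integral_mono F_le(2))
    then show ?thesis using 3 by (simp add: F_def measure_pmf.emeasure_space_1 add_increasing2)
  qed
qed

text \<open>The part of \<open>\<pi>\<close> where \<open>\<kappa> < W \<le> N\<close> is controlled by testing stationarity against
  the bounded function \<open>min W N\<close>.\<close>

lemma stationary_lyapunov_truncated_bound:
  fixes P :: "'a \<Rightarrow> 'a pmf" and W :: "'a \<Rightarrow> real"
  assumes stat: "bind_pmf \<pi> P = \<pi>" and \<rho>: "0 \<le> \<rho>" "\<rho> < 1" and "0 \<le> C" "0 \<le> \<kappa>"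
    and drift: "\<And>x. \<kappa> < W x \<Longrightarrow> (\<integral>\<^sup>+y. ennreal (W y) \<partial>P x) \<le> ennreal (\<rho> * W x)"
    and bounded: "\<And>x. W x \<le> \<kappa> \<Longrightarrow> (\<integral>\<^sup>+y. ennreal (W y) \<partial>P x) \<le> ennreal C"
  shows "(\<integral>\<^sup>+x. ennreal (W x) * indicator {y. \<kappa> < W y \<and> W y \<le> real N} x \<partial>\<pi>) \<le> ennreal (C / (1 - \<rho>))"
proof -
  define G where "G x = ennreal (W x) * indicator {y. \<kappa> < W y \<and> W y \<le> real N} x" for x
  define F where "F x = ennreal (min (W x) (real N))" for x
  have F_le: "F y \<le> ennreal (real N)" for y
    by (simp add: F_def ennreal_leI)
  have step: "(\<integral>\<^sup>+y. F y \<partial>P x) + ennreal (1 - \<rho>) * G x \<le> F x + ennreal C" for x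
    unfolding F_def G_def by (rule lyapunov_truncated_step[OF \<rho> \<open>0 \<le> \<kappa>\<close> drift bounded])
  have "(\<integral>\<^sup>+x. F x \<partial>\<pi>) + ennreal (1 - \<rho>) * (\<integral>\<^sup>+x. G x \<partial>\<pi>)
        = (\<integral>\<^sup>+x. (\<integral>\<^sup>+y. F y \<partial>P x) + ennreal (1 - \<rho>) * G x \<partial>\<pi>)"
    by (subst (1) stat[symmetric]) (simp add: nn_integral_add nn_integral_cmult)
  also have "\<dots> \<le> (\<integral>\<^sup>+x. F x + ennreal C \<partial>\<pi>)"
    by (intro nn_integral_mono step)
  also have "\<dots> = (\<integral>\<^sup>+x. F x \<partial>\<pi>) + ennreal C"
    by (simp add: nn_integral_add measure_pmf.emeasure_space_1)
  finally have ineq: "(\<integral>\<^sup>+x. F x \<partial>\<pi>) + ennreal (1 - \<rho>) * (\<integral>\<^sup>+x. G x \<partial>\<pi>)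
      \<le> (\<integral>\<^sup>+x. F x \<partial>\<pi>) + ennreal C" .
  have "(\<integral>\<^sup>+x. F x \<partial>\<pi>) \<le> (\<integral>\<^sup>+x. ennreal (real N) \<partial>\<pi>)" by (intro nn_integral_mono F_le)
  then have "(\<integral>\<^sup>+x. F x \<partial>\<pi>) \<noteq> \<infinity>" by (auto simp: measure_pmf.emeasure_space_1 top_unique)
  with ineq have "ennreal (1 - \<rho>) * (\<integral>\<^sup>+x. G x \<partial>\<pi>) \<le> ennreal C"
    by (simp add: ennreal_add_left_cancel_le)
  then have "ennreal (1 / (1 - \<rho>)) * (ennreal (1 - \<rho>) * (\<integral>\<^sup>+x. G x \<partial>\<pi>)) \<le> ennreal (1 / (1 - \<rho>)) * ennreal C"
    by (rule mult_left_mono) simp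
  then show ?thesis
    using \<rho> \<open>0 \<le> C\<close> by (simp add: G_def ennreal_mult[symmetric] mult.assoc[symmetric])
qed

lemma stationary_lyapunov_bound:
  fixes P :: "'a \<Rightarrow> 'a pmf" and W :: "'a \<Rightarrow> real"
  assumes stat: "bind_pmf \<pi> P = \<pi>" and \<rho>: "0 \<le> \<rho>" "\<rho> < 1" and "0 \<le> C" "0 \<le> \<kappa>"
    and drift: "\<And>x. \<kappa> < W x \<Longrightarrow> (\<integral>\<^sup>+y. ennreal (W y) \<partial>P x) \<le> ennreal (\<rho> * W x)"
    and bounded: "\<And>x. W x \<le> \<kappa> \<Longrightarrow> (\<integral>\<^sup>+y. ennreal (W y) \<partial>P x) \<le> ennreal C"
  shows "(\<integral>\<^sup>+x. ennreal (W x) \<partial>\<pi>) \<le> ennreal (\<kappa> + C / (1 - \<rho>))"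
proof -
  define G where "G N x = ennreal (W x) * indicator {y. \<kappa> < W y \<and> W y \<le> real N} x" for N x
  define H where "H x = ennreal (W x) * indicator {y. \<kappa> < W y} x" for x
  have "incseq G"
    unfolding G_def by (intro incseq_SucI le_funI mult_left_mono) (auto simp: indicator_def)
  have "(SUP N. G N x) = H x" for x
  proof (rule antisym)
    show "(SUP N. G N x) \<le> H x" by (intro SUP_least) (auto simp: G_def H_def indicator_def)
    obtain N :: nat where "W x \<le> real N" using real_arch_simple by blast
    then have "G N x = H x" by (simp add: G_def H_def indicator_def)
    then show "H x \<le> (SUP N. G N x)" by (metis SUP_upper UNIV_I)
  qed
  then have "(\<integral>\<^sup>+x. H x \<partial>\<pi>) = (\<integral>\<^sup>+x. (SUP N. G N x) \<partial>\<pi>)" by simp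
  also have "\<dots> = (SUP N. \<integral>\<^sup>+x. G N x \<partial>\<pi>)"
    by (rule nn_integral_monotone_convergence_SUP[OF \<open>incseq G\<close>]) simp
  also have "\<dots> \<le> ennreal (C / (1 - \<rho>))"
    unfolding G_def by (intro SUP_least stationary_lyapunov_truncated_bound[OF stat \<rho> \<open>0 \<le> C\<close> \<open>0 \<le> \<kappa>\<close> drift bounded])
  finally have tail: "(\<integral>\<^sup>+x. H x \<partial>\<pi>) \<le> ennreal (C / (1 - \<rho>))" .
  have "(\<integral>\<^sup>+x. ennreal (W x) \<partial>\<pi>) \<le> (\<integral>\<^sup>+x. ennreal \<kappa> + H x \<partial>\<pi>)"
    by (intro nn_integral_mono) (auto simp: H_def indicator_def ennreal_leI add_increasing)
  also have "\<dots> = ennreal \<kappa> + (\<integral>\<^sup>+x. H x \<partial>\<pi>)"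
    by (simp add: nn_integral_add measure_pmf.emeasure_space_1)
  also have "\<dots> \<le> ennreal (\<kappa> + C / (1 - \<rho>))"
    using tail \<rho> \<open>0 \<le> C\<close> \<open>0 \<le> \<kappa>\<close> by (simp add: ennreal_plus add_left_mono)
  finally show ?thesis .
qed

lemma power_le_fact_mult_exp:
  fixes x \<theta> :: real
  assumes "0 \<le> x" "0 < \<theta>"
  shows "x ^ r \<le> fact r / \<theta> ^ r * exp (\<theta> * x)"
proof -
  have "(\<lambda>n. (\<theta> * x) ^ n / fact n) sums exp (\<theta> * x)"
    using exp_converges[of "\<theta> * x"] by (simp add: divide_inverse_commute)
  then have "(\<theta> * x) ^ r / fact r \<le> exp (\<theta> * x)"
    using sum_le_suminf[of "\<lambda>n. (\<theta> * x) ^ n / fact n" "{r}"] assms by (simp add: sums_iff)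
  then show ?thesis using assms by (simp add: power_mult_distrib field_simps)
qed

section \<open>One step of the queue dynamics\<close>

definition queue_update :: "real^'n^'n \<Rightarrow> real^'n^'n \<Rightarrow> real^'n^'n \<Rightarrow> real^'n^'n" where
  "queue_update R A S = (\<chi> i j. max 0 (R$i$j + A$i$j - S$i$j))"

definition perp_norm :: "real^'n^'n \<Rightarrow> real^'n^'n \<Rightarrow> real" where
  "perp_norm c R = cnorm c (perp_K c R)"

definition jump_bound :: "real^'n^'n \<Rightarrow> nat \<Rightarrow> real" where
  "jump_bound c Amax = (\<Sum>i\<in>UNIV. \<Sum>j\<in>UNIV. c$i$j * (real Amax + 1)^2)"

context
  fixes c :: "real^'n::finite^'n"
  assumes cpos: "\<forall>i j. 0 < c$i$j"
begin

lemma perp_norm_nonneg: "0 \<le> perp_norm c R"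
  by (simp add: perp_norm_def cnorm_nonneg[OF cpos])

lemma jump_bound_pos: "0 < jump_bound c Amax"
  unfolding jump_bound_def using cpos by (intro sum_pos) auto

lemma cinner_queue_update_diff_le:
  fixes p :: "'n \<Rightarrow> 'n"
  assumes R: "\<And>i j. 0 \<le> R$i$j" and A: "\<And>i j. 0 \<le> A$i$j \<and> A$i$j \<le> real Amax"
  defines "\<Delta> \<equiv> queue_update R A (pmat p) - R"
  shows "cinner c \<Delta> \<Delta> \<le> jump_bound c Amax"
  unfolding cinner_def jump_bound_def
proof (intro sum_mono)
  fix i j
  have "\<Delta>$i$j = max (- R$i$j) (A$i$j - pmat p$i$j)"
    by (simp add: \<Delta>_def queue_update_def max_def)
  then have "\<bar>\<Delta>$i$j\<bar> \<le> real Amax + 1"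
    using pmat_entry_cases[of p i j] A[of i j] R[of i j] by (auto simp: max_def)
  then have "(\<Delta>$i$j)^2 \<le> (real Amax + 1)^2"
    using power_mono[of "\<bar>\<Delta>$i$j\<bar>" "real Amax + 1" 2] by simp
  then show "c$i$j * \<Delta>$i$j * \<Delta>$i$j \<le> c$i$j * (real Amax + 1)^2"
    using cpos by (simp add: mult.assoc power2_eq_square[symmetric] less_imp_le)
qed

lemma perp_norm_queue_update_diff_le:
  assumes "\<And>i j. 0 \<le> R$i$j" "\<And>i j. 0 \<le> A$i$j \<and> A$i$j \<le> real Amax"
  shows "\<bar>perp_norm c (queue_update R A (pmat p)) - perp_norm c R\<bar> \<le> sqrt (jump_bound c Amax)"
proof -
  define \<Delta> where "\<Delta> = queue_update R A (pmat p) - R"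
  have "cnorm c \<Delta> \<le> sqrt (jump_bound c Amax)"
    unfolding cnorm_def \<Delta>_def using cinner_queue_update_diff_le[OF assms] by simp
  moreover have "cnorm c (R - queue_update R A (pmat p)) = cnorm c \<Delta>"
    unfolding \<Delta>_def by (rule cnorm_minus_commute[OF cpos])
  ultimately show ?thesis
    using cnorm_perp_K_lipschitz[OF cpos, of "queue_update R A (pmat p)" R]
      cnorm_perp_K_lipschitz[OF cpos, of R "queue_update R A (pmat p)"]
    by (simp add: perp_norm_def \<Delta>_def abs_le_iff)
qed

text \<open>The unused-service term \<open>max 0 (S - R - A)\<close> is nonzero only on empty queues, where
  the perpendicular component is nonpositive because the cone is nonnegative; this is why
  only integer queue lengths are considered.\<close>

lemma cinner_perp_K_queue_update_le:
  assumes R: "\<And>i j. R$i$j = 0 \<or> 1 \<le> R$i$j" and A: "\<And>i j. 0 \<le> A$i$j"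
  shows "cinner c (perp_K c R) (queue_update R A (pmat p) - R) \<le> cinner c (perp_K c R) (A - pmat p)"
proof -
  define S where "S = pmat p"
  define P where "P = perp_K c R"
  define \<Delta> where "\<Delta> = queue_update R A S - R"
  have "c$i$j * P$i$j * (\<Delta>$i$j - (A - S)$i$j) \<le> 0" for i j
  proof (cases "S$i$j - R$i$j - A$i$j \<le> 0")
    case True
    then show ?thesis by (simp add: \<Delta>_def queue_update_def max_def)
  next
    case False
    then have "R$i$j = 0" using R[of i j] A[of i j] pmat_entry_cases[of p i j] by (auto simp: S_def)
    then have "P$i$j \<le> 0"
      using cone_K_nonneg[OF cpos proj_K_in_cone[OF cpos], of R i j] by (simp add: P_def perp_K_def)
    moreover have "0 \<le> \<Delta>$i$j - (A - S)$i$j" by (simp add: \<Delta>_def queue_update_def)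
    ultimately show ?thesis
      using cpos by (simp add: mult_nonpos_nonneg mult_nonneg_nonpos less_imp_le)
  qed
  then have "cinner c P \<Delta> - cinner c P (A - S) \<le> 0"
    unfolding cinner_def by (simp add: right_diff_distrib sum_subtractf[symmetric] sum_nonpos)
  then show ?thesis by (simp add: P_def \<Delta>_def S_def)
qed

lemma perp_norm_queue_update_sq_le:
  assumes R: "\<And>i j. R$i$j = 0 \<or> 1 \<le> R$i$j" and A: "\<And>i j. 0 \<le> A$i$j \<and> A$i$j \<le> real Amax"
  shows "(perp_norm c (queue_update R A (pmat p)))^2
           \<le> (perp_norm c R)^2 + 2 * cinner c (perp_K c R) (A - pmat p) + jump_bound c Amax"
proof -
  define P where "P = perp_K c R"
  define \<Delta> where "\<Delta> = queue_update R A (pmat p) - R"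
  have R0: "0 \<le> R$i$j" for i j using R[of i j] by auto
  have "perp_norm c (queue_update R A (pmat p)) \<le> cnorm c (P + \<Delta>)"
    using cnorm_perp_K_le[OF cpos proj_K_in_cone[OF cpos]]
    by (simp add: perp_norm_def P_def \<Delta>_def perp_K_def)
  then have "(perp_norm c (queue_update R A (pmat p)))^2 \<le> (cnorm c (P + \<Delta>))^2"
    using perp_norm_nonneg by (simp add: power_mono)
  also have "\<dots> = cinner c P P + 2 * cinner c P \<Delta> + cinner c \<Delta> \<Delta>"
    unfolding cnorm_power2[OF cpos]
    by (simp add: cinner_add_left cinner_add_right cinner_commute[of c \<Delta> P])
  also have "cinner c P P = (perp_norm c R)^2"
    by (simp add: perp_norm_def cnorm_power2[OF cpos] P_def)
  also have "cinner c P \<Delta> \<le> cinner c P (A - pmat p)"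
    unfolding P_def \<Delta>_def using R A by (intro cinner_perp_K_queue_update_le) auto
  also have "cinner c \<Delta> \<Delta> \<le> jump_bound c Amax"
    unfolding \<Delta>_def by (rule cinner_queue_update_diff_le[OF R0 A])
  finally show ?thesis by (simp add: P_def)
qed

end

lemma exp_le_quadratic:
  fixes x :: real
  assumes "\<bar>x\<bar> \<le> 1"
  shows "exp x \<le> 1 + x + x^2"
proof (cases "0 \<le> x")
  case True
  then show ?thesis using exp_bound[of x] assms by simp
next
  case False
  define t where "t = - x"
  have t: "0 < t" "t \<le> 1" using False assms by (auto simp: t_def)
  have pos: "0 < 1 - t + t^2" using t by (smt (verit) power2_less_0 zero_less_power2)
  have "1 \<le> (1 - t + t^2) * (1 + t)"
    using t by (simp add: algebra_simps power2_eq_square)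
  also have "\<dots> \<le> (1 - t + t^2) * exp t"
    using pos exp_ge_add_one_self[of t] by (intro mult_left_mono) auto
  finally have "exp (- t) \<le> 1 - t + t^2"
    by (simp add: exp_minus field_simps)
  then show ?thesis by (simp add: t_def)
qed

lemma le_of_power2_le_add:
  fixes v v0 z :: real
  assumes "0 \<le> v" "0 < v0" "v^2 \<le> v0^2 + z"
  shows "v \<le> v0 + z / (2 * v0)"
proof -
  have "(v0 + z / (2 * v0))^2 = v0^2 + z + (z / (2 * v0))^2"
    using assms(2) by (simp add: power2_eq_square field_simps)
  then have "v^2 \<le> (v0 + z / (2 * v0))^2" using assms(3) by (smt (verit) zero_le_power2)
  moreover have "0 \<le> v0 + z / (2 * v0)"
  proof -
    have "- (v0^2) \<le> z" using assms(1,3) by (smt (verit) zero_le_power2)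
    then have "- v0 / 2 \<le> z / (2 * v0)" using assms(2) by (simp add: field_simps power2_eq_square)
    then show ?thesis using assms(2) by linarith
  qed
  ultimately show ?thesis by (rule power2_le_imp_le)
qed

text \<open>A second-order bound on \<open>exp (\<theta> V')\<close> that is affine in the arrivals, so that its
  expectation can be computed from the arrival rates.\<close>

lemma exp_perp_norm_queue_update_le:
  fixes c R A :: "real^'n::finite^'n"
  assumes cpos: "\<forall>i j. 0 < c$i$j"
    and R: "\<And>i j. R$i$j = 0 \<or> 1 \<le> R$i$j" and A: "\<And>i j. 0 \<le> A$i$j \<and> A$i$j \<le> real Amax"
    and V0: "0 < perp_norm c R" and \<theta>: "0 < \<theta>" "\<theta> * sqrt (jump_bound c Amax) \<le> 1"
  defines "D \<equiv> jump_bound c Amax" and "V0 \<equiv> perp_norm c R"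
  shows "exp (\<theta> * perp_norm c (queue_update R A (pmat p)))
    \<le> exp (\<theta> * V0) * (1 + \<theta> * (2 * cinner c (perp_K c R) (A - pmat p) + D) / (2 * V0) + \<theta>^2 * D)"
proof -
  define V where "V = perp_norm c (queue_update R A (pmat p))"
  have R0: "0 \<le> R$i$j" for i j using R[of i j] by auto
  have "V^2 \<le> V0^2 + (2 * cinner c (perp_K c R) (A - pmat p) + D)"
    using perp_norm_queue_update_sq_le[OF cpos R A] by (simp add: V_def V0_def D_def add.assoc)
  then have "V \<le> V0 + (2 * cinner c (perp_K c R) (A - pmat p) + D) / (2 * V0)"
    unfolding V_def V0_def by (rule le_of_power2_le_add[OF perp_norm_nonneg[OF cpos] V0])
  then have up: "V - V0 \<le> (2 * cinner c (perp_K c R) (A - pmat p) + D) / (2 * V0)" by simp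
  have jump: "\<bar>V - V0\<bar> \<le> sqrt D"
    unfolding V_def V0_def D_def by (rule perp_norm_queue_update_diff_le[OF cpos R0 A])
  then have "\<bar>\<theta> * (V - V0)\<bar> \<le> 1"
    using \<theta> by (simp add: abs_mult D_def) (smt (verit) mult_left_mono)
  then have "exp (\<theta> * (V - V0)) \<le> 1 + \<theta> * (V - V0) + (\<theta> * (V - V0))^2"
    by (rule exp_le_quadratic)
  also have "\<dots> \<le> 1 + \<theta> * ((2 * cinner c (perp_K c R) (A - pmat p) + D) / (2 * V0)) + \<theta>^2 * D"
  proof -
    have "(V - V0)^2 \<le> D"
      using power_mono[OF jump abs_ge_zero, of 2] jump_bound_pos[OF cpos, of Amax]
      by (simp add: D_def less_imp_le)
    then have "(\<theta> * (V - V0))^2 \<le> \<theta>^2 * D"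
      using \<theta>(1) by (simp add: power_mult_distrib mult_left_mono)
    moreover have "\<theta> * (V - V0) \<le> \<theta> * ((2 * cinner c (perp_K c R) (A - pmat p) + D) / (2 * V0))"
      by (rule mult_left_mono[OF up]) (use \<theta>(1) in simp)
    ultimately show ?thesis by simp
  qed
  finally have "exp (\<theta> * V0) * exp (\<theta> * (V - V0)) \<le> exp (\<theta> * V0) * (1
      + \<theta> * ((2 * cinner c (perp_K c R) (A - pmat p) + D) / (2 * V0)) + \<theta>^2 * D)"
    by (rule mult_left_mono) simp
  then show ?thesis by (simp add: V_def mult_exp_exp algebra_simps)
qed

section \<open>The random step\<close>

definition qnext :: "nat^'n^'n \<Rightarrow> nat^'n^'n \<Rightarrow> real^'n^'n \<Rightarrow> nat^'n^'n" where
  "qnext Q A S = (\<chi> i j. let q = real (Q$i$j); aa = real (A$i$j); s = S$i$j;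
                             u = max 0 (s - q - aa) in nat \<lfloor>q + aa - s + u\<rfloor>)"

lemma nn_integral_qstep:
  "(\<integral>\<^sup>+Q'. f Q' \<partial>qstep c a Q) = (\<integral>\<^sup>+A. \<integral>\<^sup>+S. f (qnext Q A S) \<partial>maxweight c Q \<partial>arrivals a)"
  by (simp add: qstep_def qnext_def)

lemma realmat_qnext:
  assumes "\<And>i j. S$i$j = 0 \<or> S$i$j = 1"
  shows "realmat (qnext Q A S) = queue_update (realmat Q) (realmat A) S"
proof -
  have "real (nat \<lfloor>real q + real b - s + max 0 (s - real q - real b)\<rfloor>) = max 0 (real q + real b - s)"
    if "s = 0 \<or> s = 1" for q b :: nat and s :: real
  proof -
    have "real q + real b - s + max 0 (s - real q - real b) = real (if s = 1 then q + b - 1 else q + b)"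
      "max 0 (real q + real b - s) = real (if s = 1 then q + b - 1 else q + b)"
      using that by (cases "q + b"; auto simp: max_def of_nat_diff)+
    then show ?thesis by (simp only: floor_of_nat nat_int)
  qed
  with assms show ?thesis by (simp add: realmat_def queue_update_def qnext_def vec_eq_iff Let_def)
qed

lemma realmat_entry_cases: "realmat Q $ i $ j = 0 \<or> 1 \<le> realmat Q $ i $ j"
  by (cases "Q$i$j") (auto simp: realmat_def)

lemma realmat_nonneg: "0 \<le> realmat Q $ i $ j"
  by (simp add: realmat_def)

definition max_weight :: "real^'n^'n \<Rightarrow> nat^'n^'n \<Rightarrow> real" where
  "max_weight c Q = Max ((\<lambda>s. cinner c (realmat Q) s) ` perm_matrices)"

lemma finite_perm_matrices: "finite (perm_matrices :: (real^'n::finite^'n) set)"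
  unfolding perm_matrices_eq_pmat_image by (intro finite_imageI finite_permutations) simp

lemma perm_matrices_nonempty: "(perm_matrices :: (real^'n::finite^'n) set) \<noteq> {}"
  unfolding perm_matrices_eq_pmat_image by (auto intro!: exI[of _ id])

lemma cinner_pmat_le_max_weight:
  fixes c :: "real^'n::finite^'n"
  assumes "p permutes UNIV"
  shows "cinner c (realmat Q) (pmat p) \<le> max_weight c Q"
  unfolding max_weight_def using finite_perm_matrices assms
  by (intro Max_ge) (auto simp: perm_matrices_eq_pmat_image)

lemma set_pmf_maxweight:
  fixes c :: "real^'n::finite^'n"
  shows "set_pmf (maxweight c Q) = {s \<in> perm_matrices. cinner c (realmat Q) s = max_weight c Q}"
proof -
  let ?f = "\<lambda>s. cinner c (realmat Q) s"
  have "max_weight c Q \<in> ?f ` perm_matrices"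
    unfolding max_weight_def using finite_perm_matrices perm_matrices_nonempty by (intro Max_in) auto
  then obtain s0 where s0: "s0 \<in> perm_matrices" "?f s0 = max_weight c Q" by (metis imageE)
  have le: "?f s \<le> max_weight c Q" if "s \<in> perm_matrices" for s
    unfolding max_weight_def using finite_perm_matrices that by (intro Max_ge) auto
  have "(\<forall>s'\<in>perm_matrices. ?f s' \<le> ?f s) \<longleftrightarrow> ?f s = max_weight c Q" if "s \<in> perm_matrices" for s
    using le[OF that] le s0 by (metis order_antisym)
  then have eq: "{s \<in> perm_matrices. \<forall>s'\<in>perm_matrices. ?f s' \<le> ?f s}
      = {s \<in> perm_matrices. ?f s = max_weight c Q}"
    by blast
  have "{s \<in> perm_matrices. ?f s = max_weight c Q} \<noteq> {}" using s0 by blast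
  moreover have "finite {s \<in> perm_matrices. ?f s = max_weight c Q}"
    by (rule finite_subset[OF _ finite_perm_matrices]) auto
  ultimately show ?thesis unfolding maxweight_def eq by (rule set_pmf_of_set)
qed

lemma maxweight_pmatE:
  fixes c :: "real^'n::finite^'n"
  assumes "S \<in> set_pmf (maxweight c Q)"
  obtains p where "p permutes UNIV" "S = pmat p" "cinner c (realmat Q) (pmat p) = max_weight c Q"
  using assms unfolding set_pmf_maxweight perm_matrices_eq_pmat_image by auto

lemma arrivals_entry_mem:
  assumes "A \<in> set_pmf (arrivals a)"
  shows "A$i$j \<in> set_pmf (a i j)"
  using assms by (auto simp: arrivals_def set_Pi_pmf PiE_dflt_def)

lemma finite_set_arrivals:
  fixes a :: "'n::finite \<Rightarrow> 'n \<Rightarrow> nat pmf"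
  assumes "\<And>i j. set_pmf (a i j) \<subseteq> {0..Amax}"
  shows "finite (set_pmf (arrivals a))"
proof -
  have "set_pmf (Pi_pmf UNIV 0 (\<lambda>(i, j). a i j)) \<subseteq> PiE UNIV (\<lambda>_. {0..Amax})"
    using assms by (force simp: set_Pi_pmf PiE_dflt_def)
  then have "finite (set_pmf (Pi_pmf UNIV 0 (\<lambda>(i, j). a i j)))"
    by (rule finite_subset) (intro finite_PiE, auto)
  then show ?thesis unfolding arrivals_def by simp
qed

lemma expectation_arrivals_entry:
  fixes a :: "'n::finite \<Rightarrow> 'n \<Rightarrow> nat pmf"
  shows "measure_pmf.expectation (arrivals a) (\<lambda>A. real (A$i$j)) = measure_pmf.expectation (a i j) real"
proof -
  have "measure_pmf.expectation (arrivals a) (\<lambda>A. real (A$i$j))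
      = measure_pmf.expectation (map_pmf (\<lambda>f. f (i, j)) (Pi_pmf UNIV 0 (\<lambda>(i, j). a i j))) real"
    by (simp add: arrivals_def)
  also have "\<dots> = measure_pmf.expectation (a i j) real"
    by (subst Pi_pmf_component) auto
  finally show ?thesis .
qed

lemma expectation_affine_cinner_arrivals:
  fixes a :: "'n::finite \<Rightarrow> 'n \<Rightarrow> nat pmf" and c P \<nu> :: "real^'n^'n"
  assumes "finite (set_pmf (arrivals a))"
    and mean: "\<And>i j. measure_pmf.expectation (a i j) real = (1 - \<epsilon>) * \<nu>$i$j"
  shows "measure_pmf.expectation (arrivals a) (\<lambda>A. \<alpha> + \<beta> * cinner c P (realmat A))
     = \<alpha> + \<beta> * ((1 - \<epsilon>) * cinner c P \<nu>)"
proof -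
  have int: "integrable (measure_pmf (arrivals a)) f" for f :: "_ \<Rightarrow> real"
    by (rule integrable_measure_pmf_finite[OF assms(1)])
  have "measure_pmf.expectation (arrivals a) (\<lambda>A. cinner c P (realmat A))
      = measure_pmf.expectation (arrivals a) (\<lambda>A. \<Sum>i\<in>UNIV. \<Sum>j\<in>UNIV. c$i$j * P$i$j * real (A$i$j))"
    by (simp add: cinner_def realmat_def)
  also have "\<dots> = (\<Sum>i\<in>UNIV. \<Sum>j\<in>UNIV. c$i$j * P$i$j * measure_pmf.expectation (arrivals a) (\<lambda>A. real (A$i$j)))"
    by (simp add: int integral_sum)
  also have "\<dots> = (1 - \<epsilon>) * cinner c P \<nu>"
    by (simp add: expectation_arrivals_entry mean cinner_def sum_distrib_left mult_ac)
  finally show ?thesis by (simp add: int)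
qed

lemma nn_integral_qstep_le:
  assumes "\<And>A S. A \<in> set_pmf (arrivals a) \<Longrightarrow> S \<in> set_pmf (maxweight c Q) \<Longrightarrow> f (qnext Q A S) \<le> g A"
  shows "(\<integral>\<^sup>+Q'. f Q' \<partial>qstep c a Q) \<le> (\<integral>\<^sup>+A. g A \<partial>arrivals a)"
  unfolding nn_integral_qstep
proof (intro nn_integral_mono_AE AE_pmfI)
  fix A assume "A \<in> set_pmf (arrivals a)"
  then have "(\<integral>\<^sup>+S. f (qnext Q A S) \<partial>maxweight c Q) \<le> (\<integral>\<^sup>+S. g A \<partial>maxweight c Q)"
    using assms by (intro nn_integral_mono_AE AE_pmfI)
  then show "(\<integral>\<^sup>+S. f (qnext Q A S) \<partial>maxweight c Q) \<le> g A"
    by (simp add: measure_pmf.emeasure_space_1)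
qed

section \<open>Exponential drift of the perpendicular component\<close>

lemma maxweight_drift_le:
  fixes c \<nu> R :: "real^'n::finite^'n"
  assumes cpos: "\<forall>i j. 0 < c$i$j" and \<nu>: "\<nu> \<in> doubly_stochastic"
    and \<eta>: "0 < \<eta>" "\<eta> < 1" "\<And>i j. \<eta> \<le> \<nu>$i$j"
    and R: "\<And>i j. 0 \<le> R$i$j" and M: "\<And>p. p permutes UNIV \<Longrightarrow> cinner c R (pmat p) \<le> M"
    and \<epsilon>: "0 \<le> \<epsilon>" "\<epsilon> * cnorm c \<nu> \<le> 1 / (2 * gap_const c \<eta>)"
  shows "2 * ((1 - \<epsilon>) * cinner c (perp_K c R) \<nu> - (M - cinner c (proj_K c R) \<nu>))
           \<le> - perp_norm c R / gap_const c \<eta>"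
proof -
  define K where "K = gap_const c \<eta>"
  define V where "V = perp_norm c R"
  have K: "0 < K" unfolding K_def by (rule gap_const_pos[OF cpos \<eta>(1)])
  have "V \<le> K * (M - cinner c R \<nu>)"
    unfolding V_def K_def perp_norm_def by (rule cnorm_perp_K_le_gap[OF cpos \<nu> \<eta> R M])
  then have gap: "cinner c R \<nu> - M \<le> - (V / K)" using K by (simp add: field_simps)
  have "- cinner c (perp_K c R) \<nu> \<le> V * cnorm c \<nu>"
    using cinner_Cauchy_Schwarz[OF cpos, of "perp_K c R" \<nu>] by (simp add: V_def perp_norm_def)
  then have "- (\<epsilon> * cinner c (perp_K c R) \<nu>) \<le> \<epsilon> * (V * cnorm c \<nu>)"
    using mult_left_mono[OF _ \<epsilon>(1)] by fastforce
  also have "\<dots> \<le> V / (2 * K)"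
    using mult_left_mono[OF \<epsilon>(2) perp_norm_nonneg[OF cpos, of R]] by (simp add: V_def K_def mult_ac)
  finally have "- (\<epsilon> * cinner c (perp_K c R) \<nu>) \<le> V / (2 * K)" .
  have "2 * ((1 - \<epsilon>) * cinner c (perp_K c R) \<nu> - (M - cinner c (proj_K c R) \<nu>))
      = 2 * (cinner c R \<nu> - M) + 2 * - (\<epsilon> * cinner c (perp_K c R) \<nu>)"
    by (simp add: perp_K_def cinner_diff_left algebra_simps)
  also have "\<dots> \<le> 2 * - (V / K) + 2 * (V / (2 * K))"
    using gap \<open>- (\<epsilon> * cinner c (perp_K c R) \<nu>) \<le> V / (2 * K)\<close> by (intro add_mono) simp_all
  also have "\<dots> = - V / K" by simp
  finally show ?thesis by (simp add: V_def K_def)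
qed

lemma drift_factor_le:
  fixes K D V \<theta> X :: real
  assumes "0 < K" "0 < D" "0 < \<theta>" "\<theta> \<le> 1 / (8 * K * D)" "4 * K * D < V" "X \<le> - V / K + D"
  shows "1 + \<theta> * X / (2 * V) + \<theta>^2 * D \<le> 1 - \<theta> / (4 * K)"
proof -
  have V: "0 < V" using assms(1,2,5) by (smt (verit) mult_pos_pos)
  have "\<theta> * X / (2 * V) \<le> \<theta> * (- V / K + D) / (2 * V)"
    using assms(3,6) V by (intro divide_right_mono mult_left_mono) auto
  also have "\<dots> = - \<theta> / (2 * K) + \<theta> * (D / (2 * V))"
    using V assms(1) by (simp add: field_simps)
  also have "\<theta> * (D / (2 * V)) \<le> \<theta> * (1 / (8 * K))"
    using assms(1,3,5) V by (intro mult_left_mono) (simp_all add: field_simps)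
  finally have "\<theta> * X / (2 * V) \<le> - \<theta> / (2 * K) + \<theta> / (8 * K)" by simp
  moreover have "\<theta>^2 * D \<le> \<theta> / (8 * K)"
  proof -
    have "\<theta> * (\<theta> * D) \<le> \<theta> * (1 / (8 * K))"
      using assms(1-4) by (intro mult_left_mono) (simp_all add: field_simps)
    then show ?thesis by (simp add: power2_eq_square mult_ac)
  qed
  moreover have "- \<theta> / (2 * K) + \<theta> / (8 * K) + \<theta> / (8 * K) = - \<theta> / (4 * K)"
    using assms(1) by (simp add: field_simps)
  ultimately show ?thesis by linarith
qed

lemma exp_perp_norm_qnext_le:
  fixes c \<nu> :: "real^'n::finite^'n" and a :: "'n \<Rightarrow> 'n \<Rightarrow> nat pmf" and Q :: "nat^'n^'n"
  assumes cpos: "\<forall>i j. 0 < c$i$j" and \<nu>: "\<nu> \<in> doubly_stochastic"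
    and a: "\<And>i j. set_pmf (a i j) \<subseteq> {0..Amax}"
    and A: "A \<in> set_pmf (arrivals a)" and S: "S \<in> set_pmf (maxweight c Q)"
    and V0: "0 < perp_norm c (realmat Q)" and \<theta>: "0 < \<theta>" "\<theta> * sqrt (jump_bound c Amax) \<le> 1"
  defines "P \<equiv> perp_K c (realmat Q)" and "D \<equiv> jump_bound c Amax" and "V0 \<equiv> perp_norm c (realmat Q)"
  shows "exp (\<theta> * perp_norm c (realmat (qnext Q A S))) \<le> exp (\<theta> * V0) * (1
      + \<theta> * (2 * (cinner c P (realmat A) - (max_weight c Q - cinner c (proj_K c (realmat Q)) \<nu>)) + D)
        / (2 * V0) + \<theta>^2 * D)"
proof -
  obtain p where p: "p permutes UNIV" "S = pmat p" "cinner c (realmat Q) (pmat p) = max_weight c Q"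
    using maxweight_pmatE[OF S] by metis
  have "cinner c (proj_K c (realmat Q)) (pmat p) = cinner c (proj_K c (realmat Q)) \<nu>"
    by (rule cinner_cone_doubly_stochastic_eq[OF cpos proj_K_in_cone[OF cpos]
        pmat_doubly_stochastic[OF p(1)] \<nu>])
  then have "cinner c P (realmat A - pmat p)
      = cinner c P (realmat A) - (max_weight c Q - cinner c (proj_K c (realmat Q)) \<nu>)"
    by (simp add: P_def perp_K_def cinner_diff_left cinner_diff_right p(3))
  moreover have "realmat (qnext Q A S) = queue_update (realmat Q) (realmat A) (pmat p)"
    unfolding p(2) by (rule realmat_qnext) (rule pmat_entry_cases)
  moreover have "0 \<le> realmat A $ i $ j \<and> realmat A $ i $ j \<le> real Amax" for i j
    using arrivals_entry_mem[OF A, of i j] a[of i j] by (auto simp: realmat_def)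
  ultimately show ?thesis
    using exp_perp_norm_queue_update_le[OF cpos realmat_entry_cases _ V0 \<theta>, of "realmat A" p]
    by (simp add: P_def D_def V0_def)
qed

lemma exp_perp_norm_drift_large:
  fixes c \<nu> :: "real^'n::finite^'n" and a :: "'n \<Rightarrow> 'n \<Rightarrow> nat pmf" and Q :: "nat^'n^'n"
  assumes cpos: "\<forall>i j. 0 < c$i$j" and \<nu>: "\<nu> \<in> doubly_stochastic"
    and \<eta>: "0 < \<eta>" "\<eta> < 1" "\<And>i j. \<eta> \<le> \<nu>$i$j"
    and a: "\<And>i j. set_pmf (a i j) \<subseteq> {0..Amax}"
    and mean: "\<And>i j. measure_pmf.expectation (a i j) real = (1 - \<epsilon>) * \<nu>$i$j"
    and \<epsilon>: "0 \<le> \<epsilon>" "\<epsilon> * cnorm c \<nu> \<le> 1 / (2 * gap_const c \<eta>)"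
    and \<theta>: "0 < \<theta>" "\<theta> * sqrt (jump_bound c Amax) \<le> 1"
      "\<theta> \<le> 1 / (8 * gap_const c \<eta> * jump_bound c Amax)"
    and large: "4 * gap_const c \<eta> * jump_bound c Amax < perp_norm c (realmat Q)"
  shows "(\<integral>\<^sup>+Q'. ennreal (exp (\<theta> * perp_norm c (realmat Q'))) \<partial>qstep c a Q)
           \<le> ennreal ((1 - \<theta> / (4 * gap_const c \<eta>)) * exp (\<theta> * perp_norm c (realmat Q)))"
proof -
  define K where "K = gap_const c \<eta>"
  define D where "D = jump_bound c Amax"
  define V0 where "V0 = perp_norm c (realmat Q)"
  define P where "P = perp_K c (realmat Q)"
  define gap where "gap = max_weight c Q - cinner c (proj_K c (realmat Q)) \<nu>"
  define \<alpha> where "\<alpha> = exp (\<theta> * V0) * (1 + \<theta> * (D - 2 * gap) / (2 * V0) + \<theta>^2 * D)"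
  define \<beta> where "\<beta> = exp (\<theta> * V0) * \<theta> / V0"
  define h where "h A = \<alpha> + \<beta> * cinner c P (realmat A)" for A
  have K: "0 < K" unfolding K_def by (rule gap_const_pos[OF cpos \<eta>(1)])
  have D: "0 < D" unfolding D_def by (rule jump_bound_pos[OF cpos])
  have V0: "0 < V0" using large K D by (simp add: V0_def K_def D_def) (smt (verit) mult_pos_pos)
  have step: "exp (\<theta> * perp_norm c (realmat (qnext Q A S))) \<le> h A"
    if "A \<in> set_pmf (arrivals a)" "S \<in> set_pmf (maxweight c Q)" for A S
    using exp_perp_norm_qnext_le[OF cpos \<nu> a that _ \<theta>(1,2)] V0
    by (simp add: h_def \<alpha>_def \<beta>_def V0_def P_def D_def gap_def field_simps)
  have fin: "finite (set_pmf (arrivals a))" by (rule finite_set_arrivals[OF a])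
  have h_nonneg: "0 \<le> h A" if "A \<in> set_pmf (arrivals a)" for A
    using step[OF that] set_pmf_not_empty[of "maxweight c Q"] by (smt (verit) exp_gt_zero ex_in_conv)
  have "(\<integral>\<^sup>+Q'. ennreal (exp (\<theta> * perp_norm c (realmat Q'))) \<partial>qstep c a Q) \<le> (\<integral>\<^sup>+A. ennreal (h A) \<partial>arrivals a)"
    by (rule nn_integral_qstep_le) (simp add: step ennreal_leI)
  also have "\<dots> = ennreal (measure_pmf.expectation (arrivals a) h)"
    using fin by (intro nn_integral_eq_integral integrable_measure_pmf_finite AE_pmfI h_nonneg)
  also have "measure_pmf.expectation (arrivals a) h
      = exp (\<theta> * V0) * (1 + \<theta> * (2 * ((1 - \<epsilon>) * cinner c P \<nu> - gap) + D) / (2 * V0) + \<theta>^2 * D)"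
    unfolding h_def expectation_affine_cinner_arrivals[OF fin mean]
    using V0 by (simp add: \<alpha>_def \<beta>_def field_simps)
  also have "\<dots> \<le> ennreal (exp (\<theta> * V0) * (1 - \<theta> / (4 * K)))"
  proof (intro ennreal_leI mult_left_mono drift_factor_le[OF K D \<theta>(1)])
    show "2 * ((1 - \<epsilon>) * cinner c P \<nu> - gap) + D \<le> - V0 / K + D"
      using maxweight_drift_le[OF cpos \<nu> \<eta> realmat_nonneg cinner_pmat_le_max_weight \<epsilon>, of Q]
      unfolding P_def gap_def V0_def K_def by linarith
  qed (use \<theta>(3) large in \<open>simp_all add: K_def D_def V0_def\<close>)
  finally show ?thesis by (simp add: K_def V0_def mult.commute)
qed

lemma exp_perp_norm_drift_small:
  fixes c :: "real^'n::finite^'n" and a :: "'n \<Rightarrow> 'n \<Rightarrow> nat pmf" and Q :: "nat^'n^'n"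
  assumes cpos: "\<forall>i j. 0 < c$i$j" and a: "\<And>i j. set_pmf (a i j) \<subseteq> {0..Amax}"
    and "0 < \<theta>" and small: "perp_norm c (realmat Q) \<le> \<kappa>"
  shows "(\<integral>\<^sup>+Q'. ennreal (exp (\<theta> * perp_norm c (realmat Q'))) \<partial>qstep c a Q)
           \<le> ennreal (exp (\<theta> * (\<kappa> + sqrt (jump_bound c Amax))))"
proof -
  have "exp (\<theta> * perp_norm c (realmat (qnext Q A S))) \<le> exp (\<theta> * (\<kappa> + sqrt (jump_bound c Amax)))"
    if A: "A \<in> set_pmf (arrivals a)" and S: "S \<in> set_pmf (maxweight c Q)" for A S
  proof -
    obtain p where p: "S = pmat p" using maxweight_pmatE[OF S] by metis
    have "realmat (qnext Q A S) = queue_update (realmat Q) (realmat A) (pmat p)"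
      unfolding p by (rule realmat_qnext) (rule pmat_entry_cases)
    moreover have "0 \<le> realmat A $ i $ j \<and> realmat A $ i $ j \<le> real Amax" for i j
      using arrivals_entry_mem[OF A, of i j] a[of i j] by (auto simp: realmat_def)
    then have "\<bar>perp_norm c (queue_update (realmat Q) (realmat A) (pmat p)) - perp_norm c (realmat Q)\<bar>
        \<le> sqrt (jump_bound c Amax)"
      by (intro perp_norm_queue_update_diff_le[OF cpos] realmat_nonneg)
    ultimately show ?thesis using small \<open>0 < \<theta>\<close> by simp
  qed
  then have "(\<integral>\<^sup>+Q'. ennreal (exp (\<theta> * perp_norm c (realmat Q'))) \<partial>qstep c a Q)
      \<le> (\<integral>\<^sup>+A. ennreal (exp (\<theta> * (\<kappa> + sqrt (jump_bound c Amax)))) \<partial>arrivals a)"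
    by (intro nn_integral_qstep_le ennreal_leI)
  then show ?thesis by (simp add: measure_pmf.emeasure_space_1)
qed

lemma nn_integral_power_le_of_exp_moment:
  fixes f :: "'a \<Rightarrow> real" and \<pi> :: "'a pmf"
  assumes exp_moment: "(\<integral>\<^sup>+x. ennreal (exp (\<theta> * f x)) \<partial>\<pi>) \<le> ennreal B"
    and "0 < \<theta>" "1 \<le> B" "\<And>x. 0 \<le> f x" "1 \<le> r"
  shows "(\<integral>\<^sup>+x. ennreal (f x ^ r) \<partial>\<pi>) \<le> ennreal ((fact r * B / \<theta>) ^ r)"
proof -
  have "(\<integral>\<^sup>+x. ennreal (f x ^ r) \<partial>\<pi>) \<le> (\<integral>\<^sup>+x. ennreal (fact r / \<theta> ^ r) * ennreal (exp (\<theta> * f x)) \<partial>\<pi>)"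
    using assms(2,4) power_le_fact_mult_exp
    by (intro nn_integral_mono) (simp add: ennreal_mult[symmetric] ennreal_leI)
  also have "\<dots> = ennreal (fact r / \<theta> ^ r) * (\<integral>\<^sup>+x. ennreal (exp (\<theta> * f x)) \<partial>\<pi>)"
    by (simp add: nn_integral_cmult)
  also have "\<dots> \<le> ennreal (fact r / \<theta> ^ r) * ennreal B"
    by (intro mult_left_mono exp_moment) simp
  also have "\<dots> \<le> ennreal ((fact r * B / \<theta>) ^ r)"
  proof -
    have "1 \<le> fact r * B" using assms(3) fact_ge_1[of r] by (metis mult_mono' mult_1 zero_le_one)
    then have "fact r * B \<le> (fact r * B) ^ r" using assms(5) by (metis power_increasing power_one_right)
    then have "fact r / \<theta> ^ r * B \<le> (fact r * B / \<theta>) ^ r"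
      using assms(2) by (simp add: power_divide divide_right_mono)
    then show ?thesis using assms(2,3) by (simp add: ennreal_mult[symmetric] ennreal_leI)
  qed
  finally show ?thesis .
qed

lemma stationary_exp_moment_le:
  fixes c \<nu> :: "real^'n::finite^'n" and \<pi> :: "(nat^'n^'n) pmf"
  assumes cpos: "\<forall>i j. 0 < c$i$j" and \<nu>: "\<nu> \<in> doubly_stochastic"
    and \<eta>: "0 < \<eta>" "\<eta> < 1" "\<And>i j. \<eta> \<le> \<nu>$i$j"
    and a: "\<And>i j. set_pmf (a i j) \<subseteq> {0..Amax}"
    and mean: "\<And>i j. measure_pmf.expectation (a i j) real = (1 - \<epsilon>) * \<nu>$i$j"
    and \<epsilon>: "0 \<le> \<epsilon>" "\<epsilon> * cnorm c \<nu> \<le> 1 / (2 * gap_const c \<eta>)"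
    and stat: "bind_pmf \<pi> (qstep c a) = \<pi>"
    and \<theta>: "0 < \<theta>" "\<theta> * sqrt (jump_bound c Amax) \<le> 1"
      "\<theta> \<le> 1 / (8 * gap_const c \<eta> * jump_bound c Amax)" "\<theta> \<le> gap_const c \<eta>"
  defines "\<kappa> \<equiv> 4 * gap_const c \<eta> * jump_bound c Amax" and "\<rho> \<equiv> 1 - \<theta> / (4 * gap_const c \<eta>)"
  shows "(\<integral>\<^sup>+Q. ennreal (exp (\<theta> * perp_norm c (realmat Q))) \<partial>\<pi>)
           \<le> ennreal (exp (\<theta> * \<kappa>) + exp (\<theta> * (\<kappa> + sqrt (jump_bound c Amax))) / (1 - \<rho>))"
proof (rule stationary_lyapunov_bound[OF stat])
  have "0 < gap_const c \<eta>" by (rule gap_const_pos[OF cpos \<eta>(1)])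
  then show "0 \<le> \<rho>" "\<rho> < 1" using \<theta>(1,4) by (simp_all add: \<rho>_def field_simps)
  fix Q :: "nat^'n^'n"
  assume "exp (\<theta> * \<kappa>) < exp (\<theta> * perp_norm c (realmat Q))"
  then have "\<kappa> < perp_norm c (realmat Q)" using \<theta>(1) by simp
  then show "(\<integral>\<^sup>+Q'. ennreal (exp (\<theta> * perp_norm c (realmat Q'))) \<partial>qstep c a Q)
      \<le> ennreal (\<rho> * exp (\<theta> * perp_norm c (realmat Q)))"
    unfolding \<rho>_def \<kappa>_def by (rule exp_perp_norm_drift_large[OF cpos \<nu> \<eta> a mean \<epsilon> \<theta>(1-3)])
next
  fix Q :: "nat^'n^'n"
  assume "exp (\<theta> * perp_norm c (realmat Q)) \<le> exp (\<theta> * \<kappa>)"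
  then have "perp_norm c (realmat Q) \<le> \<kappa>" using \<theta>(1) by simp
  then show "(\<integral>\<^sup>+Q'. ennreal (exp (\<theta> * perp_norm c (realmat Q'))) \<partial>qstep c a Q)
      \<le> ennreal (exp (\<theta> * (\<kappa> + sqrt (jump_bound c Amax))))"
    by (rule exp_perp_norm_drift_small[OF cpos a \<theta>(1)])
qed simp_all

text \<open>The exponential drift conditions hold uniformly in \<open>\<epsilon>\<close> once \<open>\<epsilon> \<parallel>\<nu>\<parallel>\<^sub>c\<close> is small
  compared with the inverse of the gap constant; all constants below depend only on
  \<open>c\<close>, \<open>\<nu>\<close> and \<open>Amax\<close>.\<close>

lemma stationary_exp_moment_uniform:
  fixes c \<nu> :: "real^'n::finite^'n"
  assumes cpos: "\<forall>i j. 0 < c$i$j" and \<nu>: "\<nu> \<in> rel_interior doubly_stochastic"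
  obtains \<epsilon>0 \<theta> B where "0 < \<epsilon>0" "\<epsilon>0 < 1" "0 < \<theta>" "1 \<le> B"
    "\<And>\<epsilon> a \<pi>. 0 \<le> \<epsilon> \<Longrightarrow> \<epsilon> \<le> \<epsilon>0 \<Longrightarrow> (\<And>i j. set_pmf (a i j) \<subseteq> {0..Amax})
      \<Longrightarrow> (\<And>i j. measure_pmf.expectation (a i j) real = (1 - \<epsilon>) * \<nu>$i$j)
      \<Longrightarrow> bind_pmf \<pi> (qstep c a) = \<pi>
      \<Longrightarrow> (\<integral>\<^sup>+Q. ennreal (exp (\<theta> * perp_norm c (realmat Q))) \<partial>\<pi>) \<le> ennreal B"
proof -
  have \<nu>_ds: "\<nu> \<in> doubly_stochastic" using \<nu> rel_interior_subset by blast
  obtain \<eta> where \<eta>: "0 < \<eta>" "\<eta> < 1" "\<And>i j. \<eta> \<le> \<nu>$i$j"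
    using doubly_stochastic_uniform_lower_bound[OF \<nu>_ds rel_interior_doubly_stochastic_pos[OF \<nu>]] by blast
  define K where "K = gap_const c \<eta>"
  define D where "D = jump_bound c Amax"
  have K: "0 < K" unfolding K_def by (rule gap_const_pos[OF cpos \<eta>(1)])
  have D: "0 < D" unfolding D_def by (rule jump_bound_pos[OF cpos])
  define \<epsilon>0 where "\<epsilon>0 = min (1/2) (1 / (2 * K * (cnorm c \<nu> + 1)))"
  define \<theta> where "\<theta> = min (1 / sqrt D) (min (1 / (8 * K * D)) K)"
  define B where "B = exp (\<theta> * (4 * K * D)) + exp (\<theta> * (4 * K * D + sqrt D)) / (\<theta> / (4 * K))"
  have "\<theta> \<le> 1 / sqrt D" by (simp add: \<theta>_def)
  then have "\<theta> * sqrt D \<le> 1" using D by (simp add: field_simps)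
  then have \<theta>: "0 < \<theta>" "\<theta> * sqrt D \<le> 1" "\<theta> \<le> 1 / (8 * K * D)" "\<theta> \<le> K"
    using K D by (simp_all add: \<theta>_def)
  have n: "0 < cnorm c \<nu> + 1" using cnorm_nonneg[OF cpos, of \<nu>] by linarith
  show ?thesis
  proof (rule that)
    show "0 < \<epsilon>0" "\<epsilon>0 < 1" using K n by (simp_all add: \<epsilon>0_def)
    show "0 < \<theta>" by (fact \<theta>(1))
    show "1 \<le> B" using \<theta>(1) K D by (simp add: B_def add_increasing2)
    fix \<epsilon> a and \<pi> :: "(nat^'n^'n) pmf"
    assume \<epsilon>: "0 \<le> \<epsilon>" "\<epsilon> \<le> \<epsilon>0" and a: "\<And>i j. set_pmf (a i j) \<subseteq> {0..Amax}"
      and mean: "\<And>i j. measure_pmf.expectation (a i j) real = (1 - \<epsilon>) * \<nu>$i$j"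
      and stat: "bind_pmf \<pi> (qstep c a) = \<pi>"
    have "\<epsilon> \<le> 1 / (2 * K * (cnorm c \<nu> + 1))" using \<epsilon>(2) by (simp add: \<epsilon>0_def)
    then have "\<epsilon> * (cnorm c \<nu> + 1) \<le> 1 / (2 * K * (cnorm c \<nu> + 1)) * (cnorm c \<nu> + 1)"
      using n by (intro mult_right_mono) auto
    also have "\<dots> = 1 / (2 * K)" using n by simp
    finally have "\<epsilon> * cnorm c \<nu> \<le> 1 / (2 * gap_const c \<eta>)"
      using \<epsilon>(1) by (simp add: K_def algebra_simps)
    from stationary_exp_moment_le[OF cpos \<nu>_ds \<eta> a mean \<epsilon>(1) this stat, of \<theta>] \<theta>
    show "(\<integral>\<^sup>+Q. ennreal (exp (\<theta> * perp_norm c (realmat Q))) \<partial>\<pi>) \<le> ennreal B"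
      by (simp add: B_def K_def D_def)
  qed
qed

theorem proposition2:
  fixes c :: "real^'n::finite^'n" and \<nu> :: "real^'n^'n"
    and Amax :: nat and \<sigma>t :: real
  assumes "CARD('n) \<ge> 2"
    and "\<forall>i j. 0 < c$i$j"
    and "\<nu> \<in> rel_interior doubly_stochastic"
  shows "\<exists>\<nu>'>0. \<exists>M :: nat \<Rightarrow> real.
    \<forall>(a :: real \<Rightarrow> 'n \<Rightarrow> 'n \<Rightarrow> nat pmf) (q0 :: real \<Rightarrow> (nat^'n^'n) pmf)
      (\<pi> :: real \<Rightarrow> (nat^'n^'n) pmf).
      (\<forall>\<epsilon>. 0 < \<epsilon> \<and> \<epsilon> < 1 \<longrightarrow>
          (\<forall>i j. set_pmf (a \<epsilon> i j) \<subseteq> {0..Amax}) \<and>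
          (\<forall>i j. measure_pmf.expectation (a \<epsilon> i j) real = (1 - \<epsilon>) * \<nu>$i$j) \<and>
          (\<Sum>i\<in>UNIV. \<Sum>j\<in>UNIV. measure_pmf.variance (a \<epsilon> i j) real) \<le> \<sigma>t\<^sup>2 \<and>
          (\<forall>x. (\<lambda>t. pmf (qdist c (a \<epsilon>) (q0 \<epsilon>) t) x) \<longlonglongrightarrow> pmf (\<pi> \<epsilon>) x))
      \<longrightarrow> (\<forall>\<epsilon>. 0 < \<epsilon> \<and> \<epsilon> \<le> \<nu>' \<longrightarrow> (\<forall>r::nat. r \<ge> 1 \<longrightarrow>
            (\<integral>\<^sup>+ Q. ennreal (cnorm c (perp_K c (realmat Q)) ^ r) \<partial>measure_pmf (\<pi> \<epsilon>))
              \<le> ennreal (M r ^ r)))"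
proof -
  obtain \<epsilon>0 \<theta> B where \<epsilon>0: "0 < \<epsilon>0" "\<epsilon>0 < 1" and "0 < \<theta>" "1 \<le> B"
    and exp_moment: "\<And>\<epsilon> a \<pi>. 0 \<le> \<epsilon> \<Longrightarrow> \<epsilon> \<le> \<epsilon>0 \<Longrightarrow> (\<And>i j. set_pmf (a i j) \<subseteq> {0..Amax})
      \<Longrightarrow> (\<And>i j. measure_pmf.expectation (a i j) real = (1 - \<epsilon>) * \<nu>$i$j)
      \<Longrightarrow> bind_pmf \<pi> (qstep c a) = \<pi>
      \<Longrightarrow> (\<integral>\<^sup>+Q. ennreal (exp (\<theta> * perp_norm c (realmat Q))) \<partial>\<pi>) \<le> ennreal B"
    using stationary_exp_moment_uniform[OF assms(2,3)] by blast
  show ?thesis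
  proof (intro exI[of _ \<epsilon>0] conjI \<epsilon>0 exI[of _ "\<lambda>r. fact r * B / \<theta>"] allI impI)
    fix a q0 \<pi> \<epsilon> and r :: nat
    assume H: "\<forall>\<epsilon>. 0 < \<epsilon> \<and> \<epsilon> < 1 \<longrightarrow> (\<forall>i j. set_pmf (a \<epsilon> i j) \<subseteq> {0..Amax}) \<and>
          (\<forall>i j. measure_pmf.expectation (a \<epsilon> i j) real = (1 - \<epsilon>) * \<nu>$i$j) \<and>
          (\<Sum>i\<in>UNIV. \<Sum>j\<in>UNIV. measure_pmf.variance (a \<epsilon> i j) real) \<le> \<sigma>t\<^sup>2 \<and>
          (\<forall>x. (\<lambda>t. pmf (qdist c (a \<epsilon>) (q0 \<epsilon>) t) x) \<longlonglongrightarrow> pmf (\<pi> \<epsilon>) x)"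
      and \<epsilon>: "0 < \<epsilon> \<and> \<epsilon> \<le> \<epsilon>0" and "1 \<le> r"
    then have a: "\<And>i j. set_pmf (a \<epsilon> i j) \<subseteq> {0..Amax}"
      and mean: "\<And>i j. measure_pmf.expectation (a \<epsilon> i j) real = (1 - \<epsilon>) * \<nu>$i$j"
      and conv: "\<And>x. (\<lambda>t. pmf (qdist c (a \<epsilon>) (q0 \<epsilon>) t) x) \<longlonglongrightarrow> pmf (\<pi> \<epsilon>) x"
      using \<epsilon>0(2) by auto
    have stat: "bind_pmf (\<pi> \<epsilon>) (qstep c (a \<epsilon>)) = \<pi> \<epsilon>"
      by (rule pmf_limit_stationary[OF conv]) simp
    have "(\<integral>\<^sup>+Q. ennreal (exp (\<theta> * perp_norm c (realmat Q))) \<partial>\<pi> \<epsilon>) \<le> ennreal B"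
      by (rule exp_moment[OF _ _ a mean stat]) (use \<epsilon> in auto)
    then have "(\<integral>\<^sup>+Q. ennreal (perp_norm c (realmat Q) ^ r) \<partial>\<pi> \<epsilon>) \<le> ennreal ((fact r * B / \<theta>) ^ r)"
      by (rule nn_integral_power_le_of_exp_moment[where f = "\<lambda>Q. perp_norm c (realmat Q)"])
        (use \<open>0 < \<theta>\<close> \<open>1 \<le> B\<close> \<open>1 \<le> r\<close> perp_norm_nonneg[OF assms(2)] in auto)
    then show "(\<integral>\<^sup>+Q. ennreal (cnorm c (perp_K c (realmat Q)) ^ r) \<partial>measure_pmf (\<pi> \<epsilon>))
        \<le> ennreal ((fact r * B / \<theta>) ^ r)"
      by (simp add: perp_norm_def)
  qed
qed

end
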